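(* Let $1\le \ell_1\le\dots\le\ell_r\le n$ and $T\in B(\varpi_{\ell_r})\otimes\cdots\otimes B(\varpi_{\ell_1})$. (a) If $T$ is not semistandard, then $\Psi_T=0$. (b) For every $\ell\in[n]$ with $\ell\ge \ell_r$, in $H$ one has $$\Psi_T\,X^{\varpi_\ell}=\sum_{C\in B(\varpi_\ell)}X^{C}\,\Psi_{C\otimes T}.$$ (c) For every $\lambda\in(\mathbb Z^n_{\ge0})_+$, $$\mathbf 1_0\,X^{\lambda}=\sum_{T\in B(\lambda)}X^{T}\,\Psi_T .$$
   Context: Fix $n\ge1$, $[n]=\{1,\dots,n\}$. $S_n$ is the symmetric group with simple transpositions $s_i=(i,i+1)$, $i\in[n-1]$, and length function $\ell(\cdot)$. $S_n$ acts on $\mathbb Z^n$ by permuting coordinates; $\varepsilon_1,\dots,\varepsilon_n$ is the standard basis, $(\cdot,\cdot)$ the bilinear form with $(\varepsilon_i,\varepsilon_j)=\delta_{ij}$, $\alpha_i=\varepsilon_i-\varepsilon_{i+1}$, and $\varpi_k=\varepsilon_1+\dots+\varepsilon_k$ for $k\in[n]$. $(\mathbb Z^n_{\ge0})_+=\{\lambda\in\mathbb Z^n_{\ge0}:\lambda_1\ge\dots\ge\lambda_n\}$. For $\lambda\in\mathbb Z^n$, $S_{n,\lambda}=\{w\in S_n:w\lambda=\lambda\}$. The affine Hecke algebra $H$ is the $\mathbb Z[t^{\pm1}]$-algebra with generators $T_1,\dots,T_{n-1},X_1^{\pm1},\dots,X_n^{\pm1}$ and relations $T_i^2=(t-1)T_i+t$,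 $T_iT_{i+1}T_i=T_{i+1}T_iT_{i+1}$, $T_iT_j=T_jT_i$ for $|i-j|>1$, $X_iX_j=X_jX_i$, $T_iX_iT_i=tX_{i+1}$, and $T_iX_j=X_jT_i$ for $j\notin\{i,i+1\}$ (so $T_i$ is invertible, $tT_i^{-1}=T_i+1-t$). For $w\in S_n$ with reduced expression $w=s_{i_1}\cdots s_{i_m}$, $T_w=T_{i_1}\cdots T_{i_m}$ (well defined). For $\mu\in\mathbb Z^n$, $X^\mu=X_1^{\mu_1}\cdots X_n^{\mu_n}$. $H_n$ is the subalgebra generated by $T_1,\dots,T_{n-1}$, with basis $\{T_w\}_{w\in S_n}$; for $\lambda\in\mathbb Z^n$, $H_{n,\lambda}$ is the $\mathbb Z[t^{\pm1}]$-span of $\{T_w:w\in S_{n,\lambda}\}$, $\mathbf 1_\lambda=\sum_{w\in S_{n,\lambda}}T_w$, and $\mathbf 1_0=\sum_{w\in S_n}T_w$. Columns: a column of length $\ell$ is $C=(c_1,\dots,c_\ell)$ with $1\le c_1<\dots<c_\ell\le n$ (identified with the subset $\{c_1,\dots,c_\ell\}$); $B(\varpi_\ell)$ is the set of these. If $[n]\setminus C=\{c^c_{\ell+1}<\dots<c^c_n\}$, $u_C\in S_n$ is the permutation with $u_C(k)=c_k$ for $k\le \ell$ and $u_C(k)=c^c_k$ for $k>\ell$. $X^C=X_{c_1}\cdots X_{c_\ell}$. The column $(1,\dots,\ell)$ is called highest weight. Tableaux: for $1\le\ell_1\le\dots\le\ell_r\le n$, $B(\varpi_{\ell_r})\otimes\cdots\otimes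 B(\varpi_{\ell_1})$ is the set of $T=C_r\otimes\cdots\otimes C_1$ with $C_i\in B(\varpi_{\ell_i})$, viewed as a filling of the Young diagram of $\lambda=\varpi_{\ell_r}+\dots+\varpi_{\ell_1}$ with columns $C_r,\dots,C_1$ from left to right (each written top to bottom). $T$ is semistandard if entries weakly increase along each row from left to right. Every $\lambda\in(\mathbb Z^n_{\ge0})_+$ is uniquely $\varpi_{\ell_r}+\dots+\varpi_{\ell_1}$ with $\ell_1\le\dots\le\ell_r$ (column lengths); $B(\lambda)\subseteq B(\varpi_{\ell_r})\otimes\cdots\otimes B(\varpi_{\ell_1})$ is the set of semistandard ones. $X^T=\prod_i X^{C_i}$. For $C\in B(\varpi_\ell)$ with $\ell\ge\ell_r$, $C\otimes T$ means $C\otimes C_r\otimes\cdots\otimes C_1$. Definition of $\Psi$: every $h\in H_n$ can be written uniquely as $h=\sum_{F\in B(\varpi_\ell)}T_{u_F}h_F$ with $h_F\in H_{n,\varpi_\ell}$. Define $\Psi_T\in H_n$ recursively: for a single column $C\in B(\varpi_\ell)$, $\Psi_C=t^{\ell(u_C)}(T_{u_C^{-1}})^{-1}\mathbf 1_{\varpi_\ell}$; for $T=C\otimes S$ with $C\in B(\varpi_\ell)$ and $S\in B(\varpi_{\ell_r})\otimes\cdots\otimes B(\varpi_{\ell_1})$, $\ell_r\le\ell$, write $\Psi_S=\sum_{E\in B(\varpi_\ell)}T_{u_E}h_{E,S}$ with $h_{E,S}\in H_{n,\varpi_\ell}$ and set $\Psi_T=t^{\ell(u_C)}(T_{u_C^{-1}})^{-1}h_{C,S}$.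 *)

theory Defs
  imports "HOL-Combinatorics.Permutations" "HOL-Computational_Algebra.Polynomial"
begin

definition perms :: "nat \<Rightarrow> (nat \<Rightarrow> nat) set" where
  "perms n = {w. w permutes {1..n}}"

definition sref :: "nat \<Rightarrow> nat \<Rightarrow> nat" where
  "sref i = Transposition.transpose i (Suc i)"

definition len :: "nat \<Rightarrow> (nat \<Rightarrow> nat) \<Rightarrow> nat" where
  "len n w = card {(i, j). i \<in> {1..n} \<and> j \<in> {1..n} \<and> i < j \<and> w j < w i}"

definition word_perm :: "nat list \<Rightarrow> nat \<Rightarrow> nat" where
  "word_perm is = foldr (\<lambda>i f. sref i \<circ> f) is id"

definition reduced_word :: "nat \<Rightarrow> (nat \<Rightarrow> nat) \<Rightarrow> nat list \<Rightarrow> bool" where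
  "reduced_word n w is \<longleftrightarrow> set is \<subseteq> {1..<n} \<and> word_perm is = w \<and> length is = len n w"

definition rword :: "nat \<Rightarrow> (nat \<Rightarrow> nat) \<Rightarrow> nat list" where
  "rword n w = (SOME is. reduced_word n w is)"

text \<open>Weights in Z^n as functions on {1..n}; S_n acts by permuting coordinates
  (w e_i = e_{w i}).\<close>
definition perm_act :: "(nat \<Rightarrow> nat) \<Rightarrow> (nat \<Rightarrow> int) \<Rightarrow> nat \<Rightarrow> int" where
  "perm_act w lam = (\<lambda>i. lam (inv w i))"

definition stab :: "nat \<Rightarrow> (nat \<Rightarrow> int) \<Rightarrow> (nat \<Rightarrow> nat) set" where
  "stab n lam = {w \<in> perms n. \<forall>i\<in>{1..n}. perm_act w lam i = lam i}"

definition varpi :: "nat \<Rightarrow> nat \<Rightarrow> int" where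
  "varpi k = (\<lambda>i. if i \<le> k then 1 else 0)"

definition dominant :: "nat \<Rightarrow> (nat \<Rightarrow> int) \<Rightarrow> bool" where
  "dominant n lam \<longleftrightarrow> (\<forall>i\<in>{1..n}. 0 \<le> lam i) \<and> (\<forall>i\<in>{1..<n}. lam (Suc i) \<le> lam i)"

definition cols :: "nat \<Rightarrow> nat \<Rightarrow> nat set set" where
  "cols n l = {C. C \<subseteq> {1..n} \<and> card C = l}"

text \<open>k-th entry (k \<ge> 1) of a column, read top to bottom.\<close>
definition entry :: "nat set \<Rightarrow> nat \<Rightarrow> nat" where
  "entry C k = sorted_list_of_set C ! (k - 1)"

definition ucol :: "nat \<Rightarrow> nat set \<Rightarrow> nat \<Rightarrow> nat" where
  "ucol n C = (\<lambda>k. if 1 \<le> k \<and> k \<le> card C then sorted_list_of_set C ! (k - 1)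
                  else if card C < k \<and> k \<le> n then sorted_list_of_set ({1..n} - C) ! (k - card C - 1)
                  else k)"

text \<open>A tableau C_r \<otimes> ... \<otimes> C_1 is the list [C_r, ..., C_1] (columns left to right),
  with 1 \<le> l_1 \<le> ... \<le> l_r \<le> n.\<close>
definition tableau :: "nat \<Rightarrow> nat set list \<Rightarrow> bool" where
  "tableau n Ts \<longleftrightarrow> Ts \<noteq> [] \<and> (\<forall>C\<in>set Ts. C \<subseteq> {1..n} \<and> 1 \<le> card C)
      \<and> sorted_wrt (\<lambda>A B. card B \<le> card A) Ts"

definition semistandard :: "nat set list \<Rightarrow> bool" where
  "semistandard Ts \<longleftrightarrow> (\<forall>j. Suc j < length Ts \<longrightarrow>
      (\<forall>k\<in>{1..card (Ts ! Suc j)}. entry (Ts ! j) k \<le> entry (Ts ! Suc j) k))"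

text \<open>B(lambda): semistandard tableaux of shape lambda; column j+1 (from the left)
  has length #{i. lambda_i \<ge> j+1}.\<close>
definition Btab :: "nat \<Rightarrow> (nat \<Rightarrow> int) \<Rightarrow> nat set list set" where
  "Btab n lam = {Ts. length Ts = nat (lam 1)
      \<and> (\<forall>j<length Ts. Ts ! j \<in> cols n (card {i\<in>{1..n}. int (Suc j) \<le> lam i}))
      \<and> semistandard Ts}"

text \<open>An element sum_w c_w T_w of H_n is its coefficient function. Coefficients are
  taken in Z[t] (all elements occurring here have polynomial coefficients).\<close>
type_synonym hn = "(nat \<Rightarrow> nat) \<Rightarrow> int poly"

text \<open>Left multiplication by T_i:  T_i T_w = T_{s_i w} if l(s_i w) > l(w),
  and = (t-1) T_w + t T_{s_i w} otherwise.\<close>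
definition lmulT :: "nat \<Rightarrow> nat \<Rightarrow> hn \<Rightarrow> hn" where
  "lmulT n i h = (\<lambda>w. if w \<notin> perms n then 0
      else if len n (sref i \<circ> w) < len n w then h (sref i \<circ> w) + [:-1, 1:] * h w
      else [:0, 1:] * h (sref i \<circ> w))"

text \<open>Left multiplication by t T_i^{-1} = T_i + 1 - t.\<close>
definition lmulTbar :: "nat \<Rightarrow> nat \<Rightarrow> hn \<Rightarrow> hn" where
  "lmulTbar n i h = (\<lambda>w. lmulT n i h w + [:1, -1:] * h w)"

definition lmulTw :: "nat \<Rightarrow> (nat \<Rightarrow> nat) \<Rightarrow> hn \<Rightarrow> hn" where
  "lmulTw n w h = foldr (lmulT n) (rword n w) h"

text \<open>Left multiplication by t^{l(u)} (T_{u^{-1}})^{-1}: if u = s_{j_1}...s_{j_m} is reduced,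
  then u^{-1} = s_{j_m}...s_{j_1} and t^m (T_{u^{-1}})^{-1} = (tT_{j_1}^{-1})...(tT_{j_m}^{-1}).\<close>
definition lmulTbarw :: "nat \<Rightarrow> (nat \<Rightarrow> nat) \<Rightarrow> hn \<Rightarrow> hn" where
  "lmulTbarw n u h = foldr (lmulTbar n) (rword n u) h"

definition one_stab :: "nat \<Rightarrow> (nat \<Rightarrow> int) \<Rightarrow> hn" where
  "one_stab n lam = (\<lambda>w. if w \<in> stab n lam then 1 else 0)"

definition one0 :: "nat \<Rightarrow> hn" where
  "one0 n = (\<lambda>w. if w \<in> perms n then 1 else 0)"

definition in_Hstab :: "nat \<Rightarrow> (nat \<Rightarrow> int) \<Rightarrow> hn \<Rightarrow> bool" where
  "in_Hstab n lam g \<longleftrightarrow> (\<forall>w. g w \<noteq> 0 \<longrightarrow> w \<in> stab n lam)"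

text \<open>The unique decomposition h = sum_F T_{u_F} h_F, h_F \<in> H_{n,varpi_l}.\<close>
definition decomp :: "nat \<Rightarrow> nat \<Rightarrow> hn \<Rightarrow> nat set \<Rightarrow> hn" where
  "decomp n l h = (THE hF. (\<forall>F. F \<notin> cols n l \<longrightarrow> hF F = (\<lambda>_. 0))
      \<and> (\<forall>F\<in>cols n l. in_Hstab n (varpi l) (hF F))
      \<and> h = (\<lambda>w. \<Sum>F\<in>cols n l. lmulTw n (ucol n F) (hF F) w))"

fun Psi :: "nat \<Rightarrow> nat set list \<Rightarrow> hn" where
  "Psi n [] = one0 n"
| "Psi n [C] = lmulTbarw n (ucol n C) (one_stab n (varpi (card C)))"
| "Psi n (C # D # S) = lmulTbarw n (ucol n C) (decomp n (card C) (Psi n (D # S)) C)"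

definition hecke_rels :: "nat \<Rightarrow> 'a::ring_1 \<Rightarrow> 'a \<Rightarrow> (nat \<Rightarrow> 'a) \<Rightarrow> (nat \<Rightarrow> 'a) \<Rightarrow> (nat \<Rightarrow> 'a) \<Rightarrow> bool" where
  "hecke_rels n t tinv T X Xinv \<longleftrightarrow>
     (\<forall>a. t * a = a * t) \<and> t * tinv = 1 \<and> tinv * t = 1
   \<and> (\<forall>i\<in>{1..<n}. T i * T i = (t - 1) * T i + t)
   \<and> (\<forall>i. 1 \<le> i \<and> Suc i < n \<longrightarrow> T i * T (Suc i) * T i = T (Suc i) * T i * T (Suc i))
   \<and> (\<forall>i\<in>{1..<n}. \<forall>j\<in>{1..<n}. (i + 1 < j \<or> j + 1 < i) \<longrightarrow> T i * T j = T j * T i)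
   \<and> (\<forall>i\<in>{1..n}. X i * Xinv i = 1 \<and> Xinv i * X i = 1)
   \<and> (\<forall>i\<in>{1..n}. \<forall>j\<in>{1..n}. X i * X j = X j * X i)
   \<and> (\<forall>i\<in>{1..<n}. T i * X i * T i = t * X (Suc i))
   \<and> (\<forall>i\<in>{1..<n}. \<forall>j\<in>{1..n}. j \<noteq> i \<and> j \<noteq> Suc i \<longrightarrow> T i * X j = X j * T i)"

definition evp :: "'a::ring_1 \<Rightarrow> int poly \<Rightarrow> 'a" where
  "evp t p = (\<Sum>k\<le>degree p. of_int (coeff p k) * t ^ k)"

definition Tw :: "nat \<Rightarrow> (nat \<Rightarrow> 'a::ring_1) \<Rightarrow> (nat \<Rightarrow> nat) \<Rightarrow> 'a" where
  "Tw n T w = prod_list (map T (rword n w))"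

text \<open>Image in H (or any algebra with the relations) of an element of H_n.\<close>
definition ev :: "nat \<Rightarrow> 'a::ring_1 \<Rightarrow> (nat \<Rightarrow> 'a) \<Rightarrow> hn \<Rightarrow> 'a" where
  "ev n t T h = (\<Sum>w\<in>perms n. evp t (h w) * Tw n T w)"

definition Xcol :: "(nat \<Rightarrow> 'a::ring_1) \<Rightarrow> nat set \<Rightarrow> 'a" where
  "Xcol X C = prod_list (map X (sorted_list_of_set C))"

definition Xtab :: "(nat \<Rightarrow> 'a::ring_1) \<Rightarrow> nat set list \<Rightarrow> 'a" where
  "Xtab X Ts = prod_list (map (Xcol X) Ts)"

text \<open>X^mu for mu with nonnegative entries.\<close>
definition Xpow :: "nat \<Rightarrow> (nat \<Rightarrow> 'a::ring_1) \<Rightarrow> (nat \<Rightarrow> int) \<Rightarrow> 'a" where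
  "Xpow n X mu = prod_list (map (\<lambda>i. X i ^ nat (mu i)) [1..<Suc n])"

end

theory Submission
  imports Defs
begin

text \<open>
  Everything is computed in the basis \<open>T\<^sub>w\<close> of \<open>H\<^sub>n\<close>. Every \<open>w\<close> factors uniquely as \<open>w = u\<^sub>F y\<close>
  with \<open>F = w{1..l}\<close>, \<open>u\<^sub>F\<close> the minimal length element of \<open>w S\<^sub>n\<^sub>,\<^sub>l\<close> and \<open>y \<in> S\<^sub>n\<^sub>,\<^sub>l\<close>; then
  \<open>T\<^sub>w = T(u\<^sub>F) T\<^sub>y\<close>. As \<open>u\<^sub>F\<close> is increasing on \<open>{1..l}\<close> and on \<open>{l+1..n}\<close>, each letter \<open>s\<^sub>j\<close> of
  a reduced word of \<open>u\<^sub>F\<close> moves an entry \<open>j\<close> of the current image of \<open>{1..l}\<close> to \<open>j+1\<close>, so the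
  relation \<open>T\<^sub>j X\<^sub>j = X\<^sub>j\<^sub>+\<^sub>1 (T\<^sub>j + 1 - t)\<close> turns \<open>T(u\<^sub>F) X\<^sub>1\<cdots>X\<^sub>l\<close> into \<open>X\<^sup>F\<close> times the same word
  in the letters \<open>T\<^sub>j + 1 - t = t T\<^sub>j\<^sup>-\<^sup>1\<close>, while \<open>H\<^sub>n\<^sub>,\<^sub>l\<close> commutes with \<open>X\<^sub>1\<cdots>X\<^sub>l\<close>. This is (b);
  peeling the columns of \<open>\<lambda>\<close> off \<open>\<one>\<^sub>0 X\<^sup>\<lambda>\<close> one at a time gives (c), once the non-semistandard
  summands are known to vanish.

  For (a): the support of \<open>t\<^bsup>\<ell>(u)\<^esup>(T(u\<^sup>-\<^sup>1))\<^sup>-\<^sup>1 h\<close> consists of products \<open>p z\<close> with \<open>z\<close> in the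
  support of \<open>h\<close> and \<open>p\<close> the product of a subword of a reduced word of \<open>u\<close>. For \<open>u = u\<^sub>D\<close> every
  such \<open>p\<close> has \<open>p{1..d}\<close> below \<open>D\<close> in the Gale order, so a nonzero coefficient of \<open>\<Psi>(D \<otimes> S)\<close>
  on the coset of \<open>u\<^sub>C\<close> forces \<open>C\<close> below \<open>D\<close> in the Gale order, i.e. \<open>c\<^sub>k \<le> d\<^sub>k\<close> for all \<open>k\<close>.
\<close>

section \<open>Inversions, length and reduced words\<close>

definition inversions :: "nat \<Rightarrow> (nat \<Rightarrow> nat) \<Rightarrow> (nat \<times> nat) set" where
  "inversions n w = {(i, j). i \<in> {1..n} \<and> j \<in> {1..n} \<and> i < j \<and> w j < w i}"

lemma len_eq_card_inversions: "len n w = card (inversions n w)"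
  by (simp add: len_def inversions_def)

lemma finite_inversions[simp]: "finite (inversions n w)"
  by (rule finite_subset[of _ "{1..n} \<times> {1..n}"]) (auto simp: inversions_def)

lemma permutes_eq_iff: "w permutes S \<Longrightarrow> (w x = w y) = (x = y)"
  by (meson permutes_inj injD)

lemma perms_permutes: "w \<in> perms n \<Longrightarrow> w permutes {1..n}"
  by (simp add: perms_def)

lemma finite_perms[simp]: "finite (perms n)"
  unfolding perms_def by (rule finite_permutations) simp

lemma id_perms[simp]: "id \<in> perms n"
  by (simp add: perms_def permutes_id)

lemma comp_in_perms: "v \<in> perms n \<Longrightarrow> y \<in> perms n \<Longrightarrow> v \<circ> y \<in> perms n"
  unfolding perms_def using permutes_compose by blast

lemma permutes_inv_in: "w permutes {1..n} \<Longrightarrow> x \<in> {1..n} \<Longrightarrow> inv w x \<in> {1..n}"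
  using permutes_inv permutes_in_image by fastforce

lemma permutes_inv_Suc_neq: "w permutes {1..n} \<Longrightarrow> inv w i \<noteq> inv w (Suc i)"
  by (metis n_not_Suc_n permutes_inverses(1))

lemma sref_apply: "sref i x = (if x = i then Suc i else if x = Suc i then i else x)"
  by (simp add: sref_def transpose_def)

lemma inj_sref: "inj (sref j)"
  unfolding sref_def by simp

lemma sref_permutes: "i \<in> {1..<n} \<Longrightarrow> sref i permutes {1..n}"
  unfolding sref_def by (rule permutes_swap_id) auto

lemma sref_comp_in_perms: "w \<in> perms n \<Longrightarrow> i \<in> {1..<n} \<Longrightarrow> sref i \<circ> w \<in> perms n"
  unfolding perms_def using sref_permutes permutes_compose by blast

lemma sref_comp_sref[simp]: "sref i \<circ> (sref i \<circ> w) = w"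
  by (simp add: sref_def comp_assoc[symmetric])

lemma sref_comm: "Suc i < j \<or> Suc j < i \<Longrightarrow> sref i \<circ> sref j = sref j \<circ> sref i"
  by (rule ext) (auto simp: sref_apply)

lemma sref_braid: "sref i \<circ> sref (Suc i) \<circ> sref i = sref (Suc i) \<circ> sref i \<circ> sref (Suc i)"
  by (rule ext) (auto simp: sref_apply)

lemma inv_sref_comp:
  assumes "w permutes {1..n}" and "i \<in> {1..<n}"
  shows "inv (sref i \<circ> w) = inv w \<circ> sref i"
proof -
  have "bij w" using assms(1) permutes_bij by blast
  then have "inv (sref i \<circ> w) = inv w \<circ> inv (sref i)"
    by (simp add: o_inv_distrib sref_def)
  then show ?thesis by (simp add: sref_def)
qed

lemma inv_sref_comp_apply:
  assumes "w \<in> perms n" and "i \<in> {1..<n}"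
  shows "inv (sref i \<circ> w) x = inv w (sref i x)"
  using inv_sref_comp[OF perms_permutes[OF assms(1)] assms(2)] by simp

lemma inversions_sref_comp:
  assumes w: "w permutes {1..n}" and i: "i \<in> {1..<n}"
    and pq: "inv w i < inv w (Suc i)"
  shows "inversions n (sref i \<circ> w) = insert (inv w i, inv w (Suc i)) (inversions n w)"
    and "(inv w i, inv w (Suc i)) \<notin> inversions n w"
proof -
  define p where "p = inv w i"
  define q where "q = inv w (Suc i)"
  have wp: "w p = i" and wq: "w q = Suc i" using w unfolding p_def q_def
    by (auto simp: permutes_inverses)
  have pn: "p \<in> {1..n}" "q \<in> {1..n}"
    using i permutes_inv_in[OF w] unfolding p_def q_def by auto
  have pq': "p < q" using pq unfolding p_def q_def .
  have key: "(sref i (w b) < sref i (w a)) = (w b < w a \<or> (a = p \<and> b = q))" if "a < b" for a b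
  proof -
    have "(w a = i) = (a = p)" "(w a = Suc i) = (a = q)"
      and "(w b = i) = (b = p)" "(w b = Suc i) = (b = q)"
      using permutes_eq_iff[OF w] wp wq by metis+
    then show ?thesis unfolding sref_apply using that pq' by (auto split: if_splits)
  qed
  show "inversions n (sref i \<circ> w) = insert (inv w i, inv w (Suc i)) (inversions n w)"
    unfolding p_def[symmetric] q_def[symmetric] inversions_def
    using pn pq' key by auto
  show "(inv w i, inv w (Suc i)) \<notin> inversions n w"
    unfolding p_def[symmetric] q_def[symmetric] inversions_def using wp wq by auto
qed

lemma len_sref_comp_up:
  "w \<in> perms n \<Longrightarrow> i \<in> {1..<n} \<Longrightarrow> inv w i < inv w (Suc i)
    \<Longrightarrow> len n (sref i \<circ> w) = Suc (len n w)"
  using inversions_sref_comp[OF perms_permutes] by (simp add: len_eq_card_inversions)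

lemma len_sref_comp_down:
  assumes w: "w \<in> perms n" and i: "i \<in> {1..<n}" and pq: "inv w (Suc i) < inv w i"
  shows "len n w = Suc (len n (sref i \<circ> w))"
proof -
  have "inv (sref i \<circ> w) i < inv (sref i \<circ> w) (Suc i)"
    using pq by (simp add: inv_sref_comp_apply[OF w i] sref_apply)
  from len_sref_comp_up[OF sref_comp_in_perms[OF w i] i this] show ?thesis by simp
qed

lemma len_sref_comp_cases:
  assumes w: "w \<in> perms n" and i: "i \<in> {1..<n}"
  shows "len n (sref i \<circ> w) = Suc (len n w) \<and> inv w i < inv w (Suc i)
    \<or> len n w = Suc (len n (sref i \<circ> w)) \<and> inv w (Suc i) < inv w i"
  using len_sref_comp_up[OF w i] len_sref_comp_down[OF w i]
    permutes_inv_Suc_neq[OF perms_permutes[OF w], of i] by linarith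

lemma len_less_len_sref_comp_iff:
  assumes "w \<in> perms n" and "i \<in> {1..<n}"
  shows "len n w < len n (sref i \<circ> w) \<longleftrightarrow> inv w i < inv w (Suc i)"
  using len_sref_comp_cases[OF assms] by auto

lemma word_perm_Nil[simp]: "word_perm [] = id"
  by (simp add: word_perm_def)

lemma word_perm_Cons[simp]: "word_perm (i # a) = sref i \<circ> word_perm a"
  by (simp add: word_perm_def)

lemma len_id[simp]: "len n id = 0"
proof -
  have "inversions n id = {}" by (auto simp: inversions_def)
  then show ?thesis by (simp add: len_eq_card_inversions)
qed

lemma word_perm_in_perms: "set a \<subseteq> {1..<n} \<Longrightarrow> word_perm a \<in> perms n"
  by (induction a) (auto intro: sref_comp_in_perms)

lemma len_word_perm_le: "set a \<subseteq> {1..<n} \<Longrightarrow> len n (word_perm a) \<le> length a"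
proof (induction a)
  case (Cons i a)
  then have w: "word_perm a \<in> perms n" and i: "i \<in> {1..<n}" using word_perm_in_perms by auto
  have "len n (sref i \<circ> word_perm a) \<le> Suc (len n (word_perm a))"
    using len_sref_comp_cases[OF w i] by linarith
  moreover have "len n (word_perm a) \<le> length a" using Cons.IH Cons.prems by simp
  ultimately show ?case unfolding word_perm_Cons list.size by linarith
qed simp

lemma reduced_word_length: "reduced_word n w a \<Longrightarrow> length a = len n w"
  by (simp add: reduced_word_def)

lemma reduced_word_letters: "reduced_word n w a \<Longrightarrow> set a \<subseteq> {1..<n}"
  by (simp add: reduced_word_def)

lemma reduced_word_in_perms: "reduced_word n w a \<Longrightarrow> w \<in> perms n"
  unfolding reduced_word_def using word_perm_in_perms by blast

lemma reduced_word_Cons: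
  "reduced_word n w a \<Longrightarrow> i \<in> {1..<n} \<Longrightarrow> len n (sref i \<circ> w) = Suc (len n w)
    \<Longrightarrow> reduced_word n (sref i \<circ> w) (i # a)"
  by (auto simp: reduced_word_def)

lemma reduced_word_ConsD:
  assumes r: "reduced_word n w (i # a)"
  shows "reduced_word n (sref i \<circ> w) a" and "len n w = Suc (len n (sref i \<circ> w))"
proof -
  have a: "set a \<subseteq> {1..<n}" and i: "i \<in> {1..<n}" and wa: "word_perm a = sref i \<circ> w"
    and l: "length a + 1 = len n w"
    using r by (auto simp: reduced_word_def)
  have w: "w \<in> perms n" using reduced_word_in_perms[OF r] .
  have "len n (sref i \<circ> w) \<le> length a" using len_word_perm_le[OF a] wa by simp
  with len_sref_comp_cases[OF w i] l show "len n w = Suc (len n (sref i \<circ> w))" by auto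
  with l a wa show "reduced_word n (sref i \<circ> w) a" by (auto simp: reduced_word_def)
qed

lemma descent_of_reduced_word:
  assumes r: "reduced_word n w (i # a)"
  shows "inv w (Suc i) < inv w i"
proof -
  have "i \<in> {1..<n}" using reduced_word_letters[OF r] by simp
  from len_sref_comp_cases[OF reduced_word_in_perms[OF r] this] show ?thesis
    using reduced_word_ConsD(2)[OF r] by auto
qed

lemma nat_fun_descent:
  fixes f :: "nat \<Rightarrow> nat"
  shows "v < u \<Longrightarrow> f u < f v \<Longrightarrow> \<exists>k. v \<le> k \<and> k < u \<and> f (Suc k) < f k"
proof (induction u)
  case (Suc u)
  show ?case
  proof (cases "f (Suc u) < f u")
    case True
    then show ?thesis using Suc.prems by (intro exI[of _ u]) auto
  next
    case False
    then have "v < u" "f u < f v" using Suc by (auto simp: less_Suc_eq)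
    then show ?thesis using Suc.IH by (meson less_SucI)
  qed
qed simp

lemma strict_mono_self_le:
  assumes m: "\<And>x y. x \<in> {1..n} \<Longrightarrow> y \<in> {1..n} \<Longrightarrow> x < y \<Longrightarrow> f x < f y"
    and r: "\<And>x. x \<in> {1..n} \<Longrightarrow> f x \<in> {1..n}"
  shows "x \<in> {1..n} \<Longrightarrow> x \<le> (f x::nat)"
proof (induction x)
  case (Suc x)
  show ?case
  proof (cases x)
    case 0 then show ?thesis using r[OF Suc.prems] by simp
  next
    case (Suc y)
    have x: "x \<in> {1..n}" using Suc \<open>Suc x \<in> {1..n}\<close> by simp
    have "f x < f (Suc x)" by (rule m[OF x \<open>Suc x \<in> {1..n}\<close>]) simp
    then show ?thesis using Suc.IH[OF x] by simp
  qed
qed simp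

lemma inversions_empty_imp_id:
  assumes w: "w \<in> perms n" and e: "inversions n w = {}"
  shows "w = id"
proof -
  have wp: "w permutes {1..n}" using w by (simp add: perms_def)
  have mono: "w x < w y" if "x \<in> {1..n}" "y \<in> {1..n}" "x < y" for x y
  proof -
    have "\<not> w y < w x" using that e by (auto simp: inversions_def)
    moreover have "w x \<noteq> w y" using that permutes_eq_iff[OF wp] by auto
    ultimately show ?thesis by auto
  qed
  have rng: "w x \<in> {1..n}" if "x \<in> {1..n}" for x using that permutes_in_image[OF wp] by auto
  have ge: "x \<le> w x" if "x \<in> {1..n}" for x
    by (rule strict_mono_self_le[of n w, OF mono rng that])
  have le: "w (n - k) \<le> n - k" if "k < n" for k
    using that
  proof (induction k)
    case 0
    then show ?case using rng[of n] by auto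
  next
    case (Suc k)
    then have "w (n - Suc k) < w (n - k)" by (intro mono) auto
    then show ?case using Suc by auto
  qed
  have "w x = x" for x
  proof (cases "x \<in> {1..n}")
    case True
    then have "n - x < n" and "n - (n - x) = x" by auto
    then have "w x \<le> x" using le[of "n - x"] by simp
    then show ?thesis using ge[OF True] by (rule antisym)
  qed (rule permutes_not_in[OF wp])
  then show ?thesis by (intro ext) simp
qed

lemma descent_exists:
  assumes w: "w \<in> perms n" and e: "inversions n w \<noteq> {}"
  shows "\<exists>i\<in>{1..<n}. inv w (Suc i) < inv w i"
proof -
  have wp: "w permutes {1..n}" using w by (simp add: perms_def)
  obtain a b where ab: "a \<in> {1..n}" "b \<in> {1..n}" "a < b" "w b < w a"
    using e by (auto simp: inversions_def)
  have "inv w (w a) < inv w (w b)" using ab wp by (simp add: permutes_inverses)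
  from nat_fun_descent[of "w b" "w a" "inv w", OF ab(4) this] obtain k where
    k: "w b \<le> k" "k < w a" "inv w (Suc k) < inv w k" by auto
  have rng: "w x \<in> {1..n}" if "x \<in> {1..n}" for x using that permutes_in_image[OF wp] by auto
  have "k \<in> {1..<n}" using k rng[OF ab(1)] rng[OF ab(2)] by auto
  then show ?thesis using k by auto
qed

lemma reduced_word_exists: "w \<in> perms n \<Longrightarrow> \<exists>a. reduced_word n w a"
proof (induction "len n w" arbitrary: w)
  case 0
  then have "w = id" using inversions_empty_imp_id by (simp add: len_eq_card_inversions)
  then have "reduced_word n w []"
    unfolding reduced_word_def by (simp only: word_perm_Nil len_id) simp
  then show ?case by blast
next
  case (Suc m)
  then have "inversions n w \<noteq> {}" by (auto simp: len_eq_card_inversions)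
  from descent_exists[OF Suc.prems this] obtain i where i: "i \<in> {1..<n}" "inv w (Suc i) < inv w i"
    by auto
  have l: "len n w = Suc (len n (sref i \<circ> w))" by (rule len_sref_comp_down[OF Suc.prems i])
  obtain a where "reduced_word n (sref i \<circ> w) a"
    using Suc.hyps(1)[of "sref i \<circ> w"] Suc.hyps(2) l sref_comp_in_perms[OF Suc.prems i(1)]
    by auto
  then have "reduced_word n w (i # a)" using i l by (auto simp: reduced_word_def)
  then show ?case by blast
qed

lemma reduced_word_rword: "w \<in> perms n \<Longrightarrow> reduced_word n w (rword n w)"
  unfolding rword_def using reduced_word_exists someI_ex by fast

lemma reduced_word_of_descent:
  assumes w: "w \<in> perms n" and i: "i \<in> {1..<n}" and d: "inv w (Suc i) < inv w i"
  shows "\<exists>c. reduced_word n (sref i \<circ> w) c \<and> reduced_word n w (i # c)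
             \<and> len n w = Suc (len n (sref i \<circ> w))"
proof -
  have l: "len n w = Suc (len n (sref i \<circ> w))" by (rule len_sref_comp_down[OF w i d])
  obtain c where c: "reduced_word n (sref i \<circ> w) c"
    using reduced_word_exists[OF sref_comp_in_perms[OF w i]] by blast
  have "reduced_word n (sref i \<circ> (sref i \<circ> w)) (i # c)"
    by (rule reduced_word_Cons[OF c i]) (simp add: l)
  then show ?thesis using c l by auto
qed

section \<open>Matsumoto's theorem for the Hecke generators\<close>

lemma reduced_words_far_descents:
  assumes ra: "reduced_word n w (i # a)" and rb: "reduced_word n w (j # b)"
    and far: "Suc i < j \<or> Suc j < i"
  shows "\<exists>c. reduced_word n (sref i \<circ> w) (j # c) \<and> reduced_word n (sref j \<circ> w) (i # c)"
proof -
  have w: "w \<in> perms n" using reduced_word_in_perms[OF ra] .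
  have i: "i \<in> {1..<n}" using reduced_word_letters[OF ra] by auto
  have j: "j \<in> {1..<n}" using reduced_word_letters[OF rb] by auto
  have "inv (sref i \<circ> w) (Suc j) < inv (sref i \<circ> w) j"
    using descent_of_reduced_word[OF rb] far by (auto simp: inv_sref_comp_apply[OF w i] sref_apply)
  then obtain c where c: "reduced_word n (sref j \<circ> (sref i \<circ> w)) c"
    and cj: "reduced_word n (sref i \<circ> w) (j # c)"
    using reduced_word_of_descent[OF sref_comp_in_perms[OF w i] j] by blast
  have "inv (sref j \<circ> w) (Suc i) < inv (sref j \<circ> w) i"
    using descent_of_reduced_word[OF ra] far by (auto simp: inv_sref_comp_apply[OF w j] sref_apply)
  then have l: "len n (sref j \<circ> w) = Suc (len n (sref i \<circ> (sref j \<circ> w)))"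
    using len_sref_comp_down[OF sref_comp_in_perms[OF w j] i] by blast
  have "sref j \<circ> (sref i \<circ> w) = sref i \<circ> (sref j \<circ> w)"
    using sref_comm[OF far] by (metis comp_assoc)
  then have "reduced_word n (sref i \<circ> (sref j \<circ> w)) c" using c by simp
  then have "reduced_word n (sref j \<circ> w) (i # c)"
    using reduced_word_Cons[OF _ i] l by fastforce
  then show ?thesis using cj by auto
qed

lemma reduced_word_Cons_Cons:
  assumes c: "reduced_word n v c" and i: "i \<in> {1..<n}" and j: "j \<in> {1..<n}"
    and l: "len n (sref i \<circ> (sref j \<circ> v)) = Suc (Suc (len n v))"
  shows "reduced_word n (sref i \<circ> (sref j \<circ> v)) (i # j # c)"
proof -
  have v: "v \<in> perms n" using reduced_word_in_perms[OF c] .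
  have "len n (sref j \<circ> v) \<le> Suc (len n v)"
    using len_sref_comp_cases[OF v j] by linarith
  moreover have "len n (sref i \<circ> (sref j \<circ> v)) \<le> Suc (len n (sref j \<circ> v))"
    using len_sref_comp_cases[OF sref_comp_in_perms[OF v j] i] by linarith
  ultimately have "len n (sref j \<circ> v) = Suc (len n v)" using l by simp
  then show ?thesis using reduced_word_Cons[OF reduced_word_Cons[OF c j] i] l by simp
qed

lemma reduced_words_adjacent_descents:
  assumes ra: "reduced_word n w (i # a)" and rb: "reduced_word n w (Suc i # b)"
  shows "\<exists>c. reduced_word n (sref i \<circ> w) (Suc i # i # c)
           \<and> reduced_word n (sref (Suc i) \<circ> w) (i # Suc i # c)"
proof -
  let ?j = "Suc i"
  have w: "w \<in> perms n" using reduced_word_in_perms[OF ra] .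
  have i: "i \<in> {1..<n}" using reduced_word_letters[OF ra] by auto
  have j: "?j \<in> {1..<n}" using reduced_word_letters[OF rb] by auto
  have di: "inv w (Suc i) < inv w i" by (rule descent_of_reduced_word[OF ra])
  have dj: "inv w (Suc ?j) < inv w ?j" by (rule descent_of_reduced_word[OF rb])
  have wi: "sref i \<circ> w \<in> perms n" using sref_comp_in_perms[OF w i] .
  define w2 where "w2 = sref ?j \<circ> (sref i \<circ> w)"
  define w3 where "w3 = sref i \<circ> w2"
  have "inv (sref i \<circ> w) (Suc ?j) < inv (sref i \<circ> w) ?j"
    using di dj by (auto simp: inv_sref_comp_apply[OF w i] sref_apply)
  then have l1: "len n (sref i \<circ> w) = Suc (len n w2)"
    unfolding w2_def by (rule len_sref_comp_down[OF wi j])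
  have "inv w2 (Suc i) < inv w2 i"
    using di dj unfolding w2_def
    by (auto simp: inv_sref_comp_apply[OF wi j] inv_sref_comp_apply[OF w i] sref_apply)
  then have l2: "len n w2 = Suc (len n w3)"
    unfolding w3_def by (rule len_sref_comp_down[OF sref_comp_in_perms[OF wi j] i, folded w2_def])
  have "w3 \<in> perms n"
    unfolding w3_def w2_def by (intro sref_comp_in_perms wi i j)
  then obtain c where c: "reduced_word n w3 c" using reduced_word_exists by blast
  have si: "sref ?j \<circ> (sref i \<circ> w3) = sref i \<circ> w" by (simp add: w3_def w2_def)
  have sj: "sref i \<circ> (sref ?j \<circ> w3) = sref ?j \<circ> w"
  proof -
    have "sref i \<circ> (sref ?j \<circ> w3) = (sref i \<circ> sref ?j \<circ> sref i) \<circ> (sref ?j \<circ> (sref i \<circ> w))"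
      unfolding w3_def w2_def by (simp add: comp_assoc)
    also have "\<dots> = sref ?j \<circ> w"
      by (simp only: sref_braid) (simp add: comp_assoc)
    finally show ?thesis .
  qed
  have "len n (sref ?j \<circ> w) = Suc (Suc (len n w3))"
    using reduced_word_ConsD(2)[OF ra] reduced_word_ConsD(2)[OF rb] l1 l2 by simp
  then have "reduced_word n (sref ?j \<circ> w) (i # ?j # c)"
    using reduced_word_Cons_Cons[OF c i j] sj by simp
  moreover have "reduced_word n (sref i \<circ> w) (?j # i # c)"
    using reduced_word_Cons_Cons[OF c j i] si l1 l2 by simp
  ultimately show ?thesis by blast
qed

locale hecke_algebra =
  fixes n :: nat and t tinv :: "'a::ring_1" and T X Xinv :: "nat \<Rightarrow> 'a"
  assumes hecke_rels: "hecke_rels n t tinv T X Xinv"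
begin

lemma t_central: "t * a = a * t"
  using hecke_rels by (simp add: hecke_rels_def)

lemma t_tinv: "t * tinv = 1" "tinv * t = 1"
  using hecke_rels by (simp_all add: hecke_rels_def)

lemma T_quadratic: "i \<in> {1..<n} \<Longrightarrow> T i * T i = (t - 1) * T i + t"
  using hecke_rels by (simp add: hecke_rels_def)

lemma T_braid:
  "i \<in> {1..<n} \<Longrightarrow> Suc i \<in> {1..<n} \<Longrightarrow> T i * T (Suc i) * T i = T (Suc i) * T i * T (Suc i)"
  using hecke_rels by (simp add: hecke_rels_def)

lemma T_commute:
  "i \<in> {1..<n} \<Longrightarrow> j \<in> {1..<n} \<Longrightarrow> Suc i < j \<or> Suc j < i \<Longrightarrow> T i * T j = T j * T i"
  using hecke_rels unfolding hecke_rels_def by auto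

lemma X_commute: "i \<in> {1..n} \<Longrightarrow> j \<in> {1..n} \<Longrightarrow> X i * X j = X j * X i"
  using hecke_rels by (simp add: hecke_rels_def)

lemma T_X_T: "i \<in> {1..<n} \<Longrightarrow> T i * X i * T i = t * X (Suc i)"
  using hecke_rels by (simp add: hecke_rels_def)

lemma T_X_commute:
  "i \<in> {1..<n} \<Longrightarrow> j \<in> {1..n} \<Longrightarrow> j \<noteq> i \<Longrightarrow> j \<noteq> Suc i \<Longrightarrow> T i * X j = X j * T i"
  using hecke_rels by (simp add: hecke_rels_def)

lemma prod_T_reduced_words_eq:
  "reduced_word n w a \<Longrightarrow> reduced_word n w b \<Longrightarrow> prod_list (map T a) = prod_list (map T b)"
proof (induction "length a" arbitrary: w a b rule: less_induct)
  case less
  show ?case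
  proof (cases a)
    case Nil
    then show ?thesis
      using reduced_word_length[OF less.prems(1)] reduced_word_length[OF less.prems(2)] by simp
  next
    case (Cons i a')
    have ab: "length a = length b"
      using reduced_word_length[OF less.prems(1)] reduced_word_length[OF less.prems(2)] by simp
    with Cons obtain j b' where b: "b = j # b'" by (cases b) auto
    have ra: "reduced_word n w (i # a')" and rb: "reduced_word n w (j # b')"
      using less.prems Cons b by simp_all
    have i: "i \<in> {1..<n}" and j: "j \<in> {1..<n}"
      using reduced_word_letters[OF ra] reduced_word_letters[OF rb] by auto
    have la: "length a' < length a" and lb: "length b' < length a"
      using Cons b ab by auto
    have IH: "prod_list (map T c) = prod_list (map T d)"
      if "length c < length a" "reduced_word n v c" "reduced_word n v d" for v c d
      using less.hyps that by blast
    have common_tail: "prod_list (map T a) = prod_list (map T b)"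
      if "reduced_word n (sref i \<circ> w) (u @ c)" "reduced_word n (sref j \<circ> w) (v @ c)"
        and "T i * prod_list (map T u) = T j * prod_list (map T v)" for u v c
      using IH[OF la reduced_word_ConsD(1)[OF ra] that(1)] IH[OF lb reduced_word_ConsD(1)[OF rb] that(2)]
        that(3) Cons b by (simp add: mult.assoc[symmetric])
    consider "i = j" | "Suc i < j \<or> Suc j < i" | "j = Suc i" | "i = Suc j" by linarith
    then show ?thesis
    proof cases
      case 1
      then show ?thesis
        using IH[OF la reduced_word_ConsD(1)[OF ra]] reduced_word_ConsD(1)[OF rb] Cons b by simp
    next
      case 2
      then show ?thesis
        using reduced_words_far_descents[OF ra rb] common_tail[of "[j]" _ "[i]"] T_commute[OF i j]
        by fastforce
    next
      case 3
      then show ?thesis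
        using reduced_words_adjacent_descents[OF ra] rb common_tail[of "[j, i]" _ "[i, j]"]
          T_braid[OF i] j by (fastforce simp: mult.assoc)
    next
      case 4
      then show ?thesis
        using reduced_words_adjacent_descents[OF rb] ra common_tail[of "[j, i]" _ "[i, j]"]
          T_braid[OF j] i by (fastforce simp: mult.assoc)
    qed
  qed
qed

lemma Tw_sref_comp_up:
  assumes w: "w \<in> perms n" and i: "i \<in> {1..<n}" and up: "len n (sref i \<circ> w) = Suc (len n w)"
  shows "Tw n T (sref i \<circ> w) = T i * Tw n T w"
  using prod_T_reduced_words_eq[OF reduced_word_rword[OF sref_comp_in_perms[OF w i]]
      reduced_word_Cons[OF reduced_word_rword[OF w] i up]]
  by (simp add: Tw_def)

end

section \<open>Evaluating \<open>H\<^sub>n\<close> in an algebra with the Hecke relations\<close>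

lemma evp_eq_sum_atMost:
  assumes "degree p \<le> N"
  shows "evp t p = (\<Sum>k\<le>N. of_int (coeff p k) * t ^ k)"
proof -
  have "(\<Sum>k\<le>N. of_int (coeff p k) * t ^ k) = (\<Sum>k\<le>degree p. of_int (coeff p k) * t ^ k)"
    using assms by (intro sum.mono_neutral_right) (auto simp: coeff_eq_0)
  then show ?thesis by (simp add: evp_def)
qed

lemma evp_add: "evp t (p + q) = evp t p + evp t q"
proof -
  let ?N = "max (degree p) (degree q)"
  have "evp t (p + q) = (\<Sum>k\<le>?N. of_int (coeff (p + q) k) * t ^ k)"
    by (rule evp_eq_sum_atMost) (meson degree_add_le max.cobounded1 max.cobounded2)
  also have "\<dots> = evp t p + evp t q"
    by (simp add: distrib_right sum.distrib evp_eq_sum_atMost[symmetric])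
  finally show ?thesis .
qed

lemma evp_0[simp]: "evp t 0 = 0"
  by (simp add: evp_def)

lemma evp_1[simp]: "evp t 1 = 1"
  by (simp add: evp_def)

lemma evp_sum: "evp t (\<Sum>x\<in>A. f x) = (\<Sum>x\<in>A. evp t (f x))"
  by (induction A rule: infinite_finite_induct) (auto simp: evp_add)

lemma evp_smult: "evp t (smult a p) = of_int a * evp t p"
proof -
  have "evp t (smult a p) = (\<Sum>k\<le>degree p. of_int (coeff (smult a p) k) * t ^ k)"
    by (rule evp_eq_sum_atMost) (rule degree_smult_le)
  also have "\<dots> = of_int a * evp t p"
    by (simp add: evp_def sum_distrib_left mult.assoc)
  finally show ?thesis .
qed

lemma ev_add: "ev n t T (\<lambda>w. f w + g w) = ev n t T f + ev n t T g"
  by (simp add: ev_def evp_add distrib_right sum.distrib)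

lemma ev_sum: "ev n t T (\<lambda>w. \<Sum>x\<in>A. f x w) = (\<Sum>x\<in>A. ev n t T (f x))"
  unfolding ev_def evp_sum sum_distrib_right by (rule sum.swap)

context hecke_algebra
begin

lemma evp_pCons_0: "evp t (pCons 0 p) = t * evp t p"
proof -
  have "evp t (pCons 0 p) = (\<Sum>k\<le>Suc (degree p). of_int (coeff (pCons 0 p) k) * t ^ k)"
    by (rule evp_eq_sum_atMost) (simp add: degree_pCons_le)
  also have "\<dots> = (\<Sum>k\<le>degree p. of_int (coeff p k) * t ^ Suc k)"
    by (subst sum.atMost_Suc_shift) simp
  also have "\<dots> = t * evp t p"
    unfolding evp_def sum_distrib_left
  proof (rule sum.cong[OF refl])
    fix k
    show "of_int (coeff p k) * t ^ Suc k = t * (of_int (coeff p k) * t ^ k)"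
      using t_central[of "of_int (coeff p k)"] by (simp add: mult.assoc[symmetric])
  qed
  finally show ?thesis .
qed

lemma evp_linear_mult: "evp t ([:a, b:] * p) = (of_int a + of_int b * t) * evp t p"
proof -
  have "[:a, b:] * p = smult a p + pCons 0 (smult b p)"
    by (simp add: mult_pCons_left)
  then show ?thesis
    by (simp add: evp_add evp_smult evp_pCons_0 distrib_right t_central mult.assoc[symmetric])
qed

lemma evp_commute: "evp t p * x = x * evp t p"
  unfolding evp_def sum_distrib_left sum_distrib_right
proof (rule sum.cong[OF refl])
  fix k
  have "t ^ k * x = x * t ^ k" by (rule power_commuting_commutes) (rule t_central)
  then have "of_int (coeff p k) * t ^ k * x = (of_int (coeff p k) * x) * t ^ k"
    by (simp add: mult.assoc)
  also have "\<dots> = x * (of_int (coeff p k) * t ^ k)"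
    by (simp add: mult_of_int_commute mult.assoc)
  finally show "of_int (coeff p k) * t ^ k * x = x * (of_int (coeff p k) * t ^ k)" .
qed

lemma T_mult_Tw:
  assumes w: "w \<in> perms n" and i: "i \<in> {1..<n}"
  shows "T i * Tw n T w = (if len n (sref i \<circ> w) < len n w
    then (t - 1) * Tw n T w + t * Tw n T (sref i \<circ> w) else Tw n T (sref i \<circ> w))"
proof (cases "len n (sref i \<circ> w) < len n w")
  case True
  let ?v = "sref i \<circ> w"
  have "len n (sref i \<circ> ?v) = Suc (len n ?v)"
    using True len_sref_comp_cases[OF w i] by auto
  then have e: "Tw n T w = T i * Tw n T ?v"
    using Tw_sref_comp_up[OF sref_comp_in_perms[OF w i] i] by simp
  have "T i * Tw n T w = (T i * T i) * Tw n T ?v" using e by (simp add: mult.assoc)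
  also have "\<dots> = (t - 1) * Tw n T w + t * Tw n T ?v"
    unfolding T_quadratic[OF i] e by (simp add: distrib_right mult.assoc)
  finally show ?thesis using True by simp
next
  case False
  then show ?thesis using Tw_sref_comp_up[OF w i] len_sref_comp_cases[OF w i] by auto
qed

lemma evp_lmulT:
  assumes w: "w \<in> perms n"
  shows "evp t (lmulT n i h w) = (if len n (sref i \<circ> w) < len n w
    then evp t (h (sref i \<circ> w)) + (t - 1) * evp t (h w) else t * evp t (h (sref i \<circ> w)))"
proof (cases "len n (sref i \<circ> w) < len n w")
  case True
  then have "lmulT n i h w = h (sref i \<circ> w) + [:-1, 1:] * h w"
    using w by (simp add: lmulT_def)
  then have "evp t (lmulT n i h w)
      = evp t (h (sref i \<circ> w)) + (of_int (-1) + of_int 1 * t) * evp t (h w)"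
    by (simp only: evp_add evp_linear_mult)
  then show ?thesis using True by simp
next
  case False
  then have "lmulT n i h w = [:0, 1:] * h (sref i \<circ> w)"
    using w by (simp add: lmulT_def)
  then have "evp t (lmulT n i h w) = (of_int 0 + of_int 1 * t) * evp t (h (sref i \<circ> w))"
    by (simp only: evp_linear_mult)
  then show ?thesis using False by simp
qed

text \<open>Left multiplication by \<open>s\<^sub>i\<close> is an involution of \<open>S\<^sub>n\<close> exchanging the \<open>w\<close> with
  \<open>\<ell>(s\<^sub>iw) < \<ell>(w)\<close> and those with \<open>\<ell>(s\<^sub>iw) > \<ell>(w)\<close>; reindexing by it matches the two sides.\<close>

lemma ev_lmulT:
  assumes i: "i \<in> {1..<n}"
  shows "ev n t T (lmulT n i h) = T i * ev n t T h"
proof -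
  define S where "S = (\<lambda>w::nat \<Rightarrow> nat. sref i \<circ> w)"
  define D where "D = (\<lambda>w. len n (S w) < len n w)"
  define A where "A = (\<lambda>w. if D w then (t - 1) * (evp t (h w) * Tw n T w) else 0)"
  have DS: "D (S w) \<longleftrightarrow> \<not> D w" if "w \<in> perms n" for w
    using len_sref_comp_cases[OF that i] by (auto simp: D_def S_def)
  have reindex: "(\<Sum>w\<in>perms n. g (S w)) = (\<Sum>w\<in>perms n. g w)" for g :: "_ \<Rightarrow> 'a"
    by (rule sum.reindex_bij_witness[of _ S S]) (auto simp: S_def sref_comp_in_perms[OF _ i])
  have lhs: "evp t (lmulT n i h w) * Tw n T w
      = A w + (if D w then 1 else t) * (evp t (h (S w)) * Tw n T w)" if "w \<in> perms n" for w
    using evp_lmulT[OF that, of i h]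
    by (simp add: A_def D_def S_def distrib_right mult.assoc add.commute)
  define B where "B = (\<lambda>w. (if D w then t else 1) * (evp t (h w) * Tw n T (S w)))"
  have rhs: "T i * (evp t (h w) * Tw n T w) = A w + B w" if "w \<in> perms n" for w
  proof -
    have "T i * (evp t (h w) * Tw n T w) = evp t (h w) * (T i * Tw n T w)"
      using evp_commute[of "h w" "T i"] by (simp add: mult.assoc[symmetric])
    moreover have "evp t (h w) * (c * x) = c * (evp t (h w) * x)" if "c = t \<or> c = t - 1" for c x
      using that evp_commute[of "h w" t] evp_commute[of "h w" 1]
      by (auto simp: right_diff_distrib left_diff_distrib mult.assoc[symmetric])
    ultimately show ?thesis
      using T_mult_Tw[OF that i] by (simp add: A_def B_def D_def S_def distrib_left)
  qed
  have "T i * ev n t T h = (\<Sum>w\<in>perms n. A w) + (\<Sum>w\<in>perms n. B (S w))"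
    unfolding ev_def sum_distrib_left reindex by (simp add: rhs sum.distrib)
  also have "\<dots> = ev n t T (lmulT n i h)"
    unfolding ev_def sum.distrib[symmetric] using DS
    by (intro sum.cong refl) (simp add: lhs B_def S_def)
  finally show ?thesis by simp
qed

lemma ev_lmulTbar:
  assumes i: "i \<in> {1..<n}"
  shows "ev n t T (lmulTbar n i h) = (T i + 1 - t) * ev n t T h"
proof -
  have "ev n t T (\<lambda>w. [:1, -1:] * h w) = (of_int 1 + of_int (-1) * t) * ev n t T h"
    unfolding ev_def sum_distrib_left
    by (rule sum.cong[OF refl]) (simp only: evp_linear_mult mult.assoc)
  then show ?thesis
    unfolding lmulTbar_def ev_add ev_lmulT[OF i] by (simp add: algebra_simps)
qed

lemma ev_lmulTw:
  assumes "w \<in> perms n"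
  shows "ev n t T (lmulTw n w h) = Tw n T w * ev n t T h"
proof -
  have "set a \<subseteq> {1..<n} \<Longrightarrow>
      ev n t T (foldr (lmulT n) a h) = prod_list (map T a) * ev n t T h" for a
    by (induction a) (auto simp: ev_lmulT mult.assoc)
  then show ?thesis
    unfolding lmulTw_def Tw_def using reduced_word_letters[OF reduced_word_rword[OF assms]] by blast
qed

lemma ev_lmulTbarw:
  assumes "w \<in> perms n"
  shows "ev n t T (lmulTbarw n w h) = prod_list (map (\<lambda>j. T j + 1 - t) (rword n w)) * ev n t T h"
proof -
  have "set a \<subseteq> {1..<n} \<Longrightarrow>
      ev n t T (foldr (lmulTbar n) a h) = prod_list (map (\<lambda>j. T j + 1 - t) a) * ev n t T h" for a
    by (induction a) (auto simp: ev_lmulTbar mult.assoc)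
  then show ?thesis
    unfolding lmulTbarw_def using reduced_word_letters[OF reduced_word_rword[OF assms]] by blast
qed

end

section \<open>Minimal coset representatives\<close>

text \<open>\<open>preserves_prefix n l y\<close> says \<open>y \<in> S\<^sub>n\<^sub>,\<^sub>l\<close> (see \<open>stab_varpi_iff\<close>);
  \<open>min_coset_rep n l v\<close> says that \<open>v\<close> is increasing on \<open>{1..l}\<close> and on \<open>{l+1..n}\<close>, i.e. that
  \<open>v\<close> is the element of minimal length of \<open>v S\<^sub>n\<^sub>,\<^sub>l\<close>.\<close>

definition preserves_prefix :: "nat \<Rightarrow> nat \<Rightarrow> (nat \<Rightarrow> nat) \<Rightarrow> bool" where
  "preserves_prefix n l y \<longleftrightarrow> (\<forall>x\<in>{1..n}. (y x \<le> l) = (x \<le> l))"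

definition min_coset_rep :: "nat \<Rightarrow> nat \<Rightarrow> (nat \<Rightarrow> nat) \<Rightarrow> bool" where
  "min_coset_rep n l v \<longleftrightarrow> (\<forall>(a, b)\<in>inversions n v. a \<le> l \<and> l < b)"

lemma stab_varpi_iff:
  "y \<in> stab n (varpi l) \<longleftrightarrow> y \<in> perms n \<and> preserves_prefix n l y"
proof
  assume y: "y \<in> stab n (varpi l)"
  then have yp: "y \<in> perms n" and c: "\<forall>i\<in>{1..n}. varpi l (inv y i) = varpi l i"
    by (auto simp: stab_def perm_act_def)
  have "(y x \<le> l) = (x \<le> l)" if x: "x \<in> {1..n}" for x
  proof -
    have "y x \<in> {1..n}" using x permutes_in_image[OF perms_permutes[OF yp]] by auto
    from c[rule_format, OF this] show ?thesis
      using permutes_inverses(2)[OF perms_permutes[OF yp]]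
      by (auto simp: varpi_def split: if_splits)
  qed
  then show "y \<in> perms n \<and> preserves_prefix n l y" using yp by (auto simp: preserves_prefix_def)
next
  assume a: "y \<in> perms n \<and> preserves_prefix n l y"
  then have yp: "y permutes {1..n}" by (simp add: perms_def)
  have "varpi l (inv y i) = varpi l i" if i: "i \<in> {1..n}" for i
  proof -
    have "inv y i \<in> {1..n}" using permutes_inv_in[OF yp i] .
    then have "(y (inv y i) \<le> l) = (inv y i \<le> l)" using a by (auto simp: preserves_prefix_def)
    then show ?thesis using permutes_inverses(1)[OF yp] by (simp add: varpi_def)
  qed
  then show "y \<in> stab n (varpi l)" using a by (auto simp: stab_def perm_act_def)
qed

lemma stab_in_perms: "y \<in> stab n lam \<Longrightarrow> y \<in> perms n"
  by (simp add: stab_def)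

lemma preserves_prefix_inv:
  assumes yp: "y \<in> perms n" and b: "preserves_prefix n l y"
  shows "preserves_prefix n l (inv y)"
  unfolding preserves_prefix_def
proof
  fix x assume x: "x \<in> {1..n}"
  have "inv y x \<in> {1..n}" using permutes_inv_in[OF perms_permutes[OF yp] x] .
  with b have "(y (inv y x) \<le> l) = (inv y x \<le> l)" by (auto simp: preserves_prefix_def)
  then show "(inv y x \<le> l) = (x \<le> l)" using permutes_inverses(1)[OF perms_permutes[OF yp]] by simp
qed

lemma min_coset_rep_subset:
  "min_coset_rep n l v \<Longrightarrow> inversions n v' \<subseteq> inversions n v \<Longrightarrow> min_coset_rep n l v'"
  unfolding min_coset_rep_def by blast

lemma min_coset_rep_reduced_word_ConsD:
  assumes r: "reduced_word n v (j # a)" and g: "min_coset_rep n l v"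
  shows "min_coset_rep n l (sref j \<circ> v)"
    and "inv (sref j \<circ> v) j \<le> l" and "l < inv (sref j \<circ> v) (Suc j)"
    and "reduced_word n (sref j \<circ> v) a"
proof -
  let ?v = "sref j \<circ> v"
  have ra: "reduced_word n ?v a" and l: "len n v = Suc (len n ?v)" using reduced_word_ConsD[OF r]
    by auto
  have vp: "?v \<in> perms n" using reduced_word_in_perms[OF ra] .
  have j: "j \<in> {1..<n}" using reduced_word_letters[OF r] by auto
  have "len n ?v < len n (sref j \<circ> ?v)" using l by simp
  then have pq: "inv ?v j < inv ?v (Suc j)" using len_less_len_sref_comp_iff[OF vp j] by simp
  from inversions_sref_comp[OF perms_permutes[OF vp] j pq]
  have I: "inversions n v = insert (inv ?v j, inv ?v (Suc j)) (inversions n ?v)" by simp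
  show "min_coset_rep n l ?v" using min_coset_rep_subset[OF g] I by auto
  have "(inv ?v j, inv ?v (Suc j)) \<in> inversions n v" using I by simp
  then show "inv ?v j \<le> l" "l < inv ?v (Suc j)" using g unfolding min_coset_rep_def by auto
  show "reduced_word n ?v a" by (rule ra)
qed

lemma image_prefix_subset: "w \<in> perms n \<Longrightarrow> l \<le> n \<Longrightarrow> w ` {1..l} \<subseteq> {1..n}"
  using permutes_in_image[OF perms_permutes] by fastforce

lemma min_coset_rep_reduced_word_ConsD_image:
  assumes r: "reduced_word n v (j # a)" and g: "min_coset_rep n l v" and l: "l \<le> n"
  shows "j \<in> (sref j \<circ> v) ` {1..l}" and "Suc j \<notin> (sref j \<circ> v) ` {1..l}"
proof -
  let ?v = "sref j \<circ> v"
  have vp: "?v permutes {1..n}"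
    using perms_permutes[OF reduced_word_in_perms[OF reduced_word_ConsD(1)[OF r]]] .
  have j: "j \<in> {1..<n}" using reduced_word_letters[OF r] by auto
  have c1: "inv ?v j \<le> l" and c2: "l < inv ?v (Suc j)"
    using min_coset_rep_reduced_word_ConsD[OF r g] by auto
  have "inv ?v j \<in> {1..l}" using permutes_inv_in[OF vp] j c1 by force
  then show "j \<in> ?v ` {1..l}" using permutes_inverses(1)[OF vp] by (metis image_eqI)
  show "Suc j \<notin> ?v ` {1..l}"
    using c2 permutes_inverses(2)[OF vp] by (auto simp: permutes_inverses(2)[OF vp])
qed

definition Tbasis :: "(nat \<Rightarrow> nat) \<Rightarrow> hn" where
  "Tbasis y = (\<lambda>w. if w = y then 1 else 0)"

lemma lmulT_Tbasis:
  assumes y: "y \<in> perms n" and j: "j \<in> {1..<n}" and up: "len n (sref j \<circ> y) = Suc (len n y)"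
  shows "lmulT n j (Tbasis y) = Tbasis (sref j \<circ> y)"
proof (rule ext)
  fix w
  have sy: "sref j \<circ> y \<in> perms n" by (rule sref_comp_in_perms[OF y j])
  have ne: "sref j \<circ> y \<noteq> y" using up by auto
  show "lmulT n j (Tbasis y) w = Tbasis (sref j \<circ> y) w"
  proof (cases "w \<in> perms n")
    case False then show ?thesis using sy by (auto simp: lmulT_def Tbasis_def)
  next
    case True
    show ?thesis
    proof (cases "w = sref j \<circ> y")
      case True
      then have "len n (sref j \<circ> w) < len n w" using up by simp
      then show ?thesis using True \<open>w \<in> perms n\<close> ne by (simp add: lmulT_def Tbasis_def)
    next
      case False
      have "sref j \<circ> w \<noteq> y" using False by auto
      moreover have "w = y \<Longrightarrow> \<not> len n (sref j \<circ> w) < len n w" using up by simp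
      ultimately show ?thesis using False \<open>w \<in> perms n\<close> by (auto simp: lmulT_def Tbasis_def)
    qed
  qed
qed

lemma foldr_lmulT_Tbasis:
  assumes r: "reduced_word n v a" and g: "min_coset_rep n l v"
    and y: "y \<in> perms n" and b: "preserves_prefix n l y"
  shows "foldr (lmulT n) a (Tbasis y) = Tbasis (v \<circ> y)"
  using r g
proof (induction a arbitrary: v)
  case Nil
  then have "v = id" by (simp add: reduced_word_def)
  then show ?case by simp
next
  case (Cons j a)
  let ?v = "sref j \<circ> v"
  have g': "min_coset_rep n l ?v" and c1: "inv ?v j \<le> l" and c2: "l < inv ?v (Suc j)"
    and ra: "reduced_word n ?v a"
    using min_coset_rep_reduced_word_ConsD[OF Cons.prems] by auto
  have IH: "foldr (lmulT n) a (Tbasis y) = Tbasis (?v \<circ> y)" using Cons.IH[OF ra g'] .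
  have vp: "?v \<in> perms n" using reduced_word_in_perms[OF ra] .
  have j: "j \<in> {1..<n}" using reduced_word_letters[OF Cons.prems(1)] by auto
  have vy: "?v \<circ> y \<in> perms n" using vp y permutes_compose unfolding perms_def by blast
  have iv: "inv (?v \<circ> y) = inv y \<circ> inv ?v"
    using o_inv_distrib[of ?v y] perms_permutes[OF vp] perms_permutes[OF y] permutes_bij by blast
  have jn: "j \<in> {1..n}" "Suc j \<in> {1..n}" using j by auto
  have i1: "inv ?v j \<in> {1..n}" "inv ?v (Suc j) \<in> {1..n}"
    using permutes_inv_in[OF perms_permutes[OF vp]] jn by auto
  have bi: "preserves_prefix n l (inv y)" using preserves_prefix_inv[OF y b] .
  have "(inv y (inv ?v j) \<le> l) = (inv ?v j \<le> l)"
    and "(inv y (inv ?v (Suc j)) \<le> l) = (inv ?v (Suc j) \<le> l)"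
    using bi i1 unfolding preserves_prefix_def by blast+
  then have "inv y (inv ?v j) \<le> l" "l < inv y (inv ?v (Suc j))"
    using c1 c2 by auto
  then have "inv (?v \<circ> y) j < inv (?v \<circ> y) (Suc j)" using iv by simp
  then have up: "len n (sref j \<circ> (?v \<circ> y)) = Suc (len n (?v \<circ> y))" using len_sref_comp_up[OF vy j]
    by simp
  have "foldr (lmulT n) (j # a) (Tbasis y) = lmulT n j (Tbasis (?v \<circ> y))" using IH by simp
  also have "\<dots> = Tbasis (sref j \<circ> (?v \<circ> y))" by (rule lmulT_Tbasis[OF vy j up])
  also have "sref j \<circ> (?v \<circ> y) = v \<circ> y" by (simp add: comp_assoc)
  finally show ?case .
qed

lemma lmulT_linear:
  "lmulT n i (\<lambda>w. \<Sum>x\<in>A. c x * f x w) = (\<lambda>w. \<Sum>x\<in>A. c x * lmulT n i (f x) w)"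
  by (rule ext) (simp add: lmulT_def sum_distrib_left sum.distrib distrib_left mult.left_commute)

lemma foldr_lmulT_linear:
  "foldr (lmulT n) a (\<lambda>w. \<Sum>x\<in>A. c x * f x w) = (\<lambda>w. \<Sum>x\<in>A. c x * foldr (lmulT n) a (f x) w)"
  by (induction a) (simp_all add: lmulT_linear)

section \<open>The parabolic factorisation \<open>w = u\<^sub>F y\<close>\<close>

locale column =
  fixes n l :: nat and C :: "nat set"
  assumes C_cols: "C \<in> cols n l"
begin

abbreviation "xs \<equiv> sorted_list_of_set C"
abbreviation "ys \<equiv> sorted_list_of_set ({1..n} - C)"

lemma C_subset: "C \<subseteq> {1..n}" and card_C: "card C = l" and finite_C: "finite C"
  using C_cols by (auto simp: cols_def intro: finite_subset)

lemma l_le_n: "l \<le> n"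
  using card_mono[OF _ C_subset] card_C by simp

lemma length_xs: "length xs = l" and length_ys: "length ys = n - l"
  using card_C finite_C C_subset by (auto simp: card_Diff_subset)

lemma set_xs: "set xs = C" and set_ys: "set ys = {1..n} - C"
  using finite_C by auto

lemma ucol_lower: "1 \<le> k \<Longrightarrow> k \<le> l \<Longrightarrow> ucol n C k = xs ! (k - 1)"
  by (simp add: ucol_def card_C)

lemma ucol_upper: "l < k \<Longrightarrow> k \<le> n \<Longrightarrow> ucol n C k = ys ! (k - l - 1)"
  by (simp add: ucol_def card_C)

lemma ucol_outside: "k \<notin> {1..n} \<Longrightarrow> ucol n C k = k"
  using l_le_n by (auto simp: ucol_def card_C)

lemma ucol_in_column_iff: "k \<in> {1..n} \<Longrightarrow> (ucol n C k \<in> C) = (k \<le> l)"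
proof -
  assume k: "k \<in> {1..n}"
  show ?thesis
  proof (cases "k \<le> l")
    case True
    then have "ucol n C k = xs ! (k - 1)" using k ucol_lower by auto
    moreover have "k - 1 < length xs" using True k length_xs by auto
    ultimately show ?thesis using True set_xs nth_mem by metis
  next
    case False
    then have "ucol n C k = ys ! (k - l - 1)" using k ucol_upper by auto
    moreover have "k - l - 1 < length ys" using False k length_ys by auto
    ultimately have "ucol n C k \<in> {1..n} - C" using set_ys nth_mem by metis
    then show ?thesis using False by auto
  qed
qed

lemma ucol_in_range: "k \<in> {1..n} \<Longrightarrow> ucol n C k \<in> {1..n}"
proof -
  assume k: "k \<in> {1..n}"
  show ?thesis
  proof (cases "k \<le> l")
    case True
    then show ?thesis using ucol_in_column_iff[OF k] C_subset by auto
  next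
    case False
    then have "ucol n C k = ys ! (k - l - 1)" using k ucol_upper by auto
    moreover have "k - l - 1 < length ys" using False k length_ys by auto
    ultimately have "ucol n C k \<in> {1..n} - C" using set_ys nth_mem by metis
    then show ?thesis by auto
  qed
qed

lemma ucol_image_prefix: "ucol n C ` {1..l} = C"
proof
  show "ucol n C ` {1..l} \<subseteq> C" using ucol_in_column_iff l_le_n by auto
  show "C \<subseteq> ucol n C ` {1..l}"
  proof
    fix c assume "c \<in> C"
    then obtain m where m: "m < length xs" "xs ! m = c" using set_xs by (metis in_set_conv_nth)
    then have "ucol n C (Suc m) = c" using ucol_lower[of "Suc m"] length_xs by auto
    moreover have "Suc m \<in> {1..l}" using m length_xs by auto
    ultimately show "c \<in> ucol n C ` {1..l}" by (metis image_eqI)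
  qed
qed

lemma ucol_image: "ucol n C ` {1..n} = {1..n}"
proof
  show "ucol n C ` {1..n} \<subseteq> {1..n}" using ucol_in_range by auto
  show "{1..n} \<subseteq> ucol n C ` {1..n}"
  proof
    fix c assume c: "c \<in> {1..n}"
    show "c \<in> ucol n C ` {1..n}"
    proof (cases "c \<in> C")
      case True
      then have "c \<in> ucol n C ` {1..l}" using ucol_image_prefix by simp
      moreover have "{1..l} \<subseteq> {1..n}" using l_le_n by auto
      ultimately show ?thesis by blast
    next
      case False
      then obtain m where m: "m < length ys" "ys ! m = c" using set_ys c
        by (metis Diff_iff in_set_conv_nth)
      then have "ucol n C (l + Suc m) = c" using ucol_upper[of "l + Suc m"] length_ys by auto
      moreover have "l + Suc m \<in> {1..n}" using m length_ys by auto
      ultimately show ?thesis by (metis image_eqI)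
    qed
  qed
qed

lemma ucol_in_perms: "ucol n C \<in> perms n"
proof -
  have "inj_on (ucol n C) {1..n}"
    by (rule finite_surj_inj) (simp_all only: ucol_image finite_atLeastAtMost subset_refl)
  then have "bij_betw (ucol n C) {1..n} {1..n}" using ucol_image by (simp add: bij_betw_def)
  then have "ucol n C permutes {1..n}" by (rule bij_imp_permutes) (rule ucol_outside)
  then show ?thesis by (simp add: perms_def)
qed

lemma ucol_mono:
  assumes a: "a \<in> {1..n}" and b: "b \<in> {1..n}" and ab: "a < b" and same: "(a \<le> l) = (b \<le> l)"
  shows "ucol n C a < ucol n C b"
proof (cases "b \<le> l")
  case True
  have sw: "sorted_wrt (<) xs" by (rule strict_sorted_list_of_set)
  have "xs ! (a - 1) < xs ! (b - 1)"
    using sorted_wrt_nth_less[OF sw, of "a - 1" "b - 1"] a b ab True length_xs by auto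
  then show ?thesis using ucol_lower a b True ab by auto
next
  case False
  have sw: "sorted_wrt (<) ys" by (rule strict_sorted_list_of_set)
  have "ys ! (a - l - 1) < ys ! (b - l - 1)"
    using sorted_wrt_nth_less[OF sw, of "a - l - 1" "b - l - 1"] a b ab False same length_ys by auto
  then show ?thesis using ucol_upper a b False same ab by auto
qed

lemma ucol_min_coset_rep: "min_coset_rep n l (ucol n C)"
  unfolding min_coset_rep_def
proof (safe)
  fix a b assume ab: "(a, b) \<in> inversions n (ucol n C)"
  then have a: "a \<in> {1..n}" and b: "b \<in> {1..n}" and lt: "a < b" and inv: "ucol n C b < ucol n C a"
    by (auto simp: inversions_def)
  have "(a \<le> l) \<noteq> (b \<le> l)" using ucol_mono[OF a b lt] inv by auto
  then show "a \<le> l" "l < b" using lt by auto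
qed

end

lemma preserves_prefix_image:
  assumes y: "y \<in> perms n" and b: "preserves_prefix n l y" and l: "l \<le> n"
  shows "y ` {1..l} = {1..l}"
proof
  have yp: "y permutes {1..n}" using y by (simp add: perms_def)
  show "y ` {1..l} \<subseteq> {1..l}"
  proof
    fix z assume "z \<in> y ` {1..l}"
    then obtain x where x: "x \<in> {1..l}" "z = y x" by auto
    then have "x \<in> {1..n}" using l by auto
    then show "z \<in> {1..l}" using b x permutes_in_image[OF yp] unfolding preserves_prefix_def by auto
  qed
  show "{1..l} \<subseteq> y ` {1..l}"
  proof
    fix z assume z: "z \<in> {1..l}"
    then have zn: "z \<in> {1..n}" using l by auto
    have "inv y z \<in> {1..n}" using permutes_inv_in[OF yp zn] .
    moreover have "(inv y z \<le> l) = (z \<le> l)" using preserves_prefix_inv[OF y b] zn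
      unfolding preserves_prefix_def by blast
    moreover have "y (inv y z) = z" using permutes_inverses(1)[OF yp] by simp
    ultimately show "z \<in> y ` {1..l}" using z by (metis atLeastAtMost_iff image_eqI)
  qed
qed

lemma ucol_perms: "F \<in> cols n l \<Longrightarrow> ucol n F \<in> perms n"
  using column.ucol_in_perms column.intro by blast

lemma finite_cols[simp]: "finite (cols n l)"
  by (rule finite_subset[of _ "Pow {1..n}"]) (auto simp: cols_def)

lemma finite_stab[simp]: "finite (stab n lam)"
  by (rule finite_subset[of _ "perms n"]) (auto simp: stab_def)

lemma coset_factor:
  assumes w: "w \<in> perms n" and l: "l \<le> n"
  shows "w ` {1..l} \<in> cols n l" and "inv (ucol n (w ` {1..l})) \<circ> w \<in> stab n (varpi l)"
    and "ucol n (w ` {1..l}) \<circ> (inv (ucol n (w ` {1..l})) \<circ> w) = w"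
proof -
  have wp: "w permutes {1..n}" using w by (simp add: perms_def)
  let ?F = "w ` {1..l}"
  have "inj_on w {1..l}" using permutes_inj[OF wp] by (simp add: inj_on_def inj_def)
  then have "card ?F = l" by (simp add: card_image)
  moreover have "?F \<subseteq> {1..n}" by (rule image_prefix_subset[OF w l])
  ultimately show F: "?F \<in> cols n l" by (simp add: cols_def)
  interpret column n l ?F by (rule column.intro[OF F])
  let ?u = "ucol n ?F"
  have up: "?u permutes {1..n}" using ucol_in_perms by (simp add: perms_def)
  show "?u \<circ> (inv ?u \<circ> w) = w"
    using permutes_inverses(1)[OF up] by (simp add: comp_def)
  have yp: "inv ?u \<circ> w \<in> perms n" using permutes_inv[OF up] wp permutes_compose unfolding perms_def
    by blast
  have "preserves_prefix n l (inv ?u \<circ> w)"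
    unfolding preserves_prefix_def
  proof
    fix x assume x: "x \<in> {1..n}"
    have wx: "w x \<in> {1..n}" using x permutes_in_image[OF wp] by auto
    have z: "inv ?u (w x) \<in> {1..n}" using permutes_inv_in[OF up wx] .
    have "(?u (inv ?u (w x)) \<in> ?F) = (inv ?u (w x) \<le> l)" using ucol_in_column_iff[OF z] .
    moreover have "?u (inv ?u (w x)) = w x" using permutes_inverses(1)[OF up] by simp
    moreover have "(w x \<in> ?F) = (x \<le> l)" using x permutes_inj[OF wp] by (auto simp: inj_def) (metis)
    ultimately show "((inv ?u \<circ> w) x \<le> l) = (x \<le> l)" by simp
  qed
  then show "inv ?u \<circ> w \<in> stab n (varpi l)" using yp stab_varpi_iff by blast
qed

lemma coset_factor_image:
  assumes F: "F \<in> cols n l" and y: "y \<in> stab n (varpi l)"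
  shows "(ucol n F \<circ> y) ` {1..l} = F"
proof -
  interpret column n l F by (rule column.intro[OF F])
  have "y ` {1..l} = {1..l}" using preserves_prefix_image[of y n l] y l_le_n stab_varpi_iff by blast
  moreover have "(ucol n F \<circ> y) ` {1..l} = ucol n F ` (y ` {1..l})" by (rule image_comp[symmetric])
  ultimately show ?thesis using ucol_image_prefix by simp
qed

lemma coset_factor_unique:
  assumes F: "F \<in> cols n l" and D: "D \<in> cols n l" and y: "y \<in> stab n (varpi l)"
    and z: "z \<in> stab n (varpi l)" and e: "ucol n F \<circ> y = ucol n D \<circ> z"
  shows "F = D \<and> y = z"
proof -
  have FD: "F = D" using coset_factor_image[OF F y] coset_factor_image[OF D z] e by simp
  have up: "ucol n F permutes {1..n}" using ucol_perms[OF F] by (simp add: perms_def)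
  have "inv (ucol n F) \<circ> (ucol n F \<circ> y) = inv (ucol n F) \<circ> (ucol n F \<circ> z)" using e FD by simp
  then have "y = z" using permutes_inv_o(2)[OF up] by (simp add: comp_assoc[symmetric])
  then show ?thesis using FD by simp
qed

lemma coset_factor_iff:
  assumes w: "w \<in> perms n" and l: "l \<le> n" and F: "F \<in> cols n l" and y: "y \<in> stab n (varpi l)"
  shows "w = ucol n F \<circ> y \<longleftrightarrow> F = w ` {1..l} \<and> y = inv (ucol n (w ` {1..l})) \<circ> w"
proof
  assume e: "w = ucol n F \<circ> y"
  show "F = w ` {1..l} \<and> y = inv (ucol n (w ` {1..l})) \<circ> w"
    using coset_factor_unique[OF F coset_factor(1)[OF w l] y coset_factor(2)[OF w l]
        trans[OF e[symmetric] coset_factor(3)[OF w l, symmetric]]] .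
qed (use coset_factor(3)[OF w l] in simp)

lemma sum_coset_factors_Tbasis:
  assumes l: "l \<le> n"
  shows "(\<Sum>F\<in>cols n l. \<Sum>y\<in>stab n (varpi l). c F y * Tbasis (ucol n F \<circ> y) w)
    = (if w \<in> perms n then c (w ` {1..l}) (inv (ucol n (w ` {1..l})) \<circ> w) else 0)"
proof -
  let ?B = "cols n l \<times> stab n (varpi l)"
  have "(\<Sum>F\<in>cols n l. \<Sum>y\<in>stab n (varpi l). c F y * Tbasis (ucol n F \<circ> y) w)
      = (\<Sum>p\<in>?B. c (fst p) (snd p) * Tbasis (ucol n (fst p) \<circ> snd p) w)"
    by (simp add: sum.cartesian_product split_beta)
  also have "\<dots> = (if w \<in> perms n then c (w ` {1..l}) (inv (ucol n (w ` {1..l})) \<circ> w) else 0)"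
  proof (cases "w \<in> perms n")
    case False
    have "ucol n (fst p) \<circ> snd p \<in> perms n" if "p \<in> ?B" for p
      using that by (intro comp_in_perms[OF ucol_perms stab_in_perms]) auto
    then have "(\<Sum>p\<in>?B. c (fst p) (snd p) * Tbasis (ucol n (fst p) \<circ> snd p) w) = 0"
      using False by (intro sum.neutral) (auto simp: Tbasis_def)
    then show ?thesis using False by simp
  next
    case True
    let ?p0 = "(w ` {1..l}, inv (ucol n (w ` {1..l})) \<circ> w)"
    have "Tbasis (ucol n (fst p) \<circ> snd p) w = (if p = ?p0 then 1 else 0)" if p: "p \<in> ?B" for p
    proof -
      have "w = ucol n (fst p) \<circ> snd p \<longleftrightarrow> p = ?p0"
        using p by (subst coset_factor_iff[OF True l]) (auto simp: prod_eq_iff)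
      then show ?thesis by (auto simp: Tbasis_def)
    qed
    then have "(\<Sum>p\<in>?B. c (fst p) (snd p) * Tbasis (ucol n (fst p) \<circ> snd p) w)
        = (\<Sum>p\<in>?B. if p = ?p0 then c (fst p) (snd p) else 0)"
      by (intro sum.cong) auto
    also have "\<dots> = c (fst ?p0) (snd ?p0)" using coset_factor[OF True l] by (simp add: sum.delta')
    finally show ?thesis using True by simp
  qed
  finally show ?thesis .
qed

lemma expand_Hstab:
  assumes g: "in_Hstab n lam g"
  shows "g = (\<lambda>w. \<Sum>y\<in>stab n lam. g y * Tbasis y w)"
proof (rule ext)
  fix w
  have "(\<Sum>y\<in>stab n lam. g y * Tbasis y w) = (\<Sum>y\<in>stab n lam. if y = w then g y else 0)"
    by (rule sum.cong) (auto simp: Tbasis_def)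
  also have "\<dots> = (if w \<in> stab n lam then g w else 0)" by (simp add: sum.delta')
  also have "\<dots> = g w" using g by (auto simp: in_Hstab_def)
  finally show "g w = (\<Sum>y\<in>stab n lam. g y * Tbasis y w)" by simp
qed

lemma lmulTw_ucol_Hstab:
  assumes F: "F \<in> cols n l" and g: "in_Hstab n (varpi l) g"
  shows "lmulTw n (ucol n F) g = (\<lambda>w. \<Sum>y\<in>stab n (varpi l). g y * Tbasis (ucol n F \<circ> y) w)"
proof -
  interpret column n l F by (rule column.intro[OF F])
  have r: "reduced_word n (ucol n F) (rword n (ucol n F))"
    by (rule reduced_word_rword[OF ucol_in_perms])
  have "lmulTw n (ucol n F) g
      = foldr (lmulT n) (rword n (ucol n F)) (\<lambda>w. \<Sum>y\<in>stab n (varpi l). g y * Tbasis y w)"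
    unfolding lmulTw_def using expand_Hstab[OF g] by simp
  also have "\<dots> = (\<lambda>w. \<Sum>y\<in>stab n (varpi l). g y * foldr (lmulT n) (rword n (ucol n F)) (Tbasis y) w)"
    by (rule foldr_lmulT_linear)
  also have "\<dots> = (\<lambda>w. \<Sum>y\<in>stab n (varpi l). g y * Tbasis (ucol n F \<circ> y) w)"
  proof (rule ext, rule sum.cong[OF refl])
    fix w y assume y: "y \<in> stab n (varpi l)"
    then have "y \<in> perms n" "preserves_prefix n l y" using stab_varpi_iff by auto
    then show "g y * foldr (lmulT n) (rword n (ucol n F)) (Tbasis y) w
        = g y * Tbasis (ucol n F \<circ> y) w"
      using foldr_lmulT_Tbasis[OF r ucol_min_coset_rep] by simp
  qed
  finally show ?thesis .
qed

lemma sum_lmulTw_ucol_apply: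
  assumes l: "l \<le> n" and hF: "\<And>F. F \<in> cols n l \<Longrightarrow> in_Hstab n (varpi l) (hF F)"
  shows "(\<Sum>F\<in>cols n l. lmulTw n (ucol n F) (hF F) w)
    = (if w \<in> perms n then hF (w ` {1..l}) (inv (ucol n (w ` {1..l})) \<circ> w) else 0)"
proof -
  have "(\<Sum>F\<in>cols n l. lmulTw n (ucol n F) (hF F) w)
      = (\<Sum>F\<in>cols n l. \<Sum>y\<in>stab n (varpi l). hF F y * Tbasis (ucol n F \<circ> y) w)"
    by (rule sum.cong[OF refl]) (simp add: lmulTw_ucol_Hstab hF)
  also have "\<dots> = (if w \<in> perms n then hF (w ` {1..l}) (inv (ucol n (w ` {1..l})) \<circ> w) else 0)"
    by (rule sum_coset_factors_Tbasis[OF l])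
  finally show ?thesis .
qed

definition coset_coeffs :: "nat \<Rightarrow> nat \<Rightarrow> hn \<Rightarrow> nat set \<Rightarrow> hn" where
  "coset_coeffs n l h = (\<lambda>F. if F \<in> cols n l
     then (\<lambda>y. if y \<in> stab n (varpi l) then h (ucol n F \<circ> y) else 0) else (\<lambda>_. 0))"

lemma coset_coeffs_Hstab: "in_Hstab n (varpi l) (coset_coeffs n l h F)"
  by (auto simp: in_Hstab_def coset_coeffs_def)

lemma sum_lmulTw_coset_coeffs:
  assumes supp: "\<And>w. w \<notin> perms n \<Longrightarrow> h w = 0" and l: "l \<le> n"
  shows "h = (\<lambda>w. \<Sum>F\<in>cols n l. lmulTw n (ucol n F) (coset_coeffs n l h F) w)"
proof (rule ext)
  fix w
  have "h w = (if w \<in> perms n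
      then coset_coeffs n l h (w ` {1..l}) (inv (ucol n (w ` {1..l})) \<circ> w) else 0)"
    using coset_factor[OF _ l, of w] supp[of w] by (auto simp: coset_coeffs_def)
  then show "h w = (\<Sum>F\<in>cols n l. lmulTw n (ucol n F) (coset_coeffs n l h F) w)"
    by (simp only: sum_lmulTw_ucol_apply[OF l coset_coeffs_Hstab])
qed

lemma decomp_eq_coset_coeffs:
  assumes supp: "\<And>w. w \<notin> perms n \<Longrightarrow> h w = 0" and l: "l \<le> n"
  shows "decomp n l h = coset_coeffs n l h"
  unfolding decomp_def
proof (rule the_equality)
  show "(\<forall>F. F \<notin> cols n l \<longrightarrow> coset_coeffs n l h F = (\<lambda>_. 0))
    \<and> (\<forall>F\<in>cols n l. in_Hstab n (varpi l) (coset_coeffs n l h F))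
    \<and> h = (\<lambda>w. \<Sum>F\<in>cols n l. lmulTw n (ucol n F) (coset_coeffs n l h F) w)"
  proof (intro conjI allI impI ballI)
    show "coset_coeffs n l h F = (\<lambda>_. 0)" if "F \<notin> cols n l" for F
      using that by (simp add: coset_coeffs_def)
    show "in_Hstab n (varpi l) (coset_coeffs n l h F)" for F by (rule coset_coeffs_Hstab)
    show "h = (\<lambda>w. \<Sum>F\<in>cols n l. lmulTw n (ucol n F) (coset_coeffs n l h F) w)"
      by (rule sum_lmulTw_coset_coeffs[OF supp l])
  qed
next
  fix hF
  assume hF: "(\<forall>F. F \<notin> cols n l \<longrightarrow> hF F = (\<lambda>_. 0)) \<and> (\<forall>F\<in>cols n l. in_Hstab n (varpi l) (hF F))
    \<and> h = (\<lambda>w. \<Sum>F\<in>cols n l. lmulTw n (ucol n F) (hF F) w)"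
  have "hF F y = coset_coeffs n l h F y" if F: "F \<in> cols n l" and y: "y \<in> stab n (varpi l)" for F y
  proof -
    have up: "ucol n F permutes {1..n}" using ucol_perms[OF F] by (simp add: perms_def)
    have "inv (ucol n F) \<circ> (ucol n F \<circ> y) = y"
      using permutes_inv_o(2)[OF up] by (simp add: comp_assoc[symmetric])
    then have "h (ucol n F \<circ> y) = hF F y"
      using hF sum_lmulTw_ucol_apply[OF l, of hF "ucol n F \<circ> y"] coset_factor_image[OF F y]
        comp_in_perms[OF ucol_perms[OF F] stab_in_perms[OF y]] by simp
    then show ?thesis using F y by (simp add: coset_coeffs_def)
  qed
  then show "hF = coset_coeffs n l h"
    using hF by (intro ext) (auto simp: coset_coeffs_def in_Hstab_def)
qed

section \<open>Commuting the \<open>T\<^sub>i\<close> past products of the \<open>X\<^sub>j\<close>\<close>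

lemma commute_prod_list:
  fixes a :: "'b::monoid_mult"
  assumes "\<And>y. y \<in> set ys \<Longrightarrow> a * f y = f y * a"
  shows "a * prod_list (map f ys) = prod_list (map f ys) * a"
  using assms
proof (induction ys)
  case (Cons y ys)
  then have "a * f y * prod_list (map f ys) = f y * (prod_list (map f ys) * a)"
    by (simp add: mult.assoc)
  then show ?case by (simp add: mult.assoc)
qed simp

context hecke_algebra
begin

lemma T_mult_Tbar: "i \<in> {1..<n} \<Longrightarrow> T i * (T i + 1 - t) = t"
proof -
  assume i: "i \<in> {1..<n}"
  have "T i * (T i + 1 - t) = T i * T i + T i - T i * t" by (simp add: algebra_simps)
  also have "\<dots> = t" using T_quadratic[OF i] t_central[of "T i"] by (simp add: algebra_simps)
  finally show ?thesis .
qed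

lemma mult_T_right_cancel:
  assumes i: "i \<in> {1..<n}" and e: "A * T i = B * T i"
  shows "A = B"
proof -
  have "A = A * T i * (T i + 1 - t) * tinv" using T_mult_Tbar[OF i] t_tinv by (simp add: mult.assoc)
  also have "\<dots> = B * T i * (T i + 1 - t) * tinv" using e by simp
  also have "\<dots> = B" using T_mult_Tbar[OF i] t_tinv by (simp add: mult.assoc)
  finally show ?thesis .
qed

lemma T_mult_X:
  assumes i: "i \<in> {1..<n}"
  shows "T i * X i = X (Suc i) * (T i + 1 - t)"
proof (rule mult_T_right_cancel[OF i])
  have "X (Suc i) * (T i + 1 - t) * T i = X (Suc i) * ((T i + 1 - t) * T i)"
    by (simp add: mult.assoc)
  also have "(T i + 1 - t) * T i = T i * (T i + 1 - t)" using t_central[of "T i"]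
    by (simp add: algebra_simps)
  also have "\<dots> = t" by (rule T_mult_Tbar[OF i])
  finally have "X (Suc i) * (T i + 1 - t) * T i = t * X (Suc i)" using t_central by simp
  then show "T i * X i * T i = X (Suc i) * (T i + 1 - t) * T i" using T_X_T[OF i] by simp
qed

lemma prod_list_X_remove1:
  "x \<in> set xs \<Longrightarrow> set xs \<subseteq> {1..n} \<Longrightarrow> prod_list (map X xs) = X x * prod_list (map X (remove1 x xs))"
proof (induction xs)
  case Nil then show ?case by simp
next
  case (Cons y ys)
  show ?case
  proof (cases "y = x")
    case True then show ?thesis by simp
  next
    case False
    then have "prod_list (map X (y # ys)) = X y * (X x * prod_list (map X (remove1 x ys)))"
      using Cons by simp
    also have "\<dots> = X x * (X y * prod_list (map X (remove1 x ys)))"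
    proof -
      have "x \<in> {1..n}" "y \<in> {1..n}" using Cons.prems by auto
      then have "X y * X x = X x * X y" using X_commute by blast
      then show ?thesis by (simp add: mult.assoc[symmetric])
    qed
    finally show ?thesis using False by simp
  qed
qed

lemma Xcol_remove:
  assumes "finite A" "A \<subseteq> {1..n}" "a \<in> A"
  shows "Xcol X A = X a * Xcol X (A - {a})"
  unfolding Xcol_def using assms
  by (simp add: sorted_list_of_set_remove prod_list_X_remove1)

lemma T_commute_Xcol:
  "i \<in> {1..<n} \<Longrightarrow> finite A \<Longrightarrow> A \<subseteq> {1..n} - {i, Suc i} \<Longrightarrow> T i * Xcol X A = Xcol X A * T i"
  unfolding Xcol_def by (intro commute_prod_list T_X_commute) auto

lemma tinv_commute: "tinv * a = a * tinv"
proof -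
  have "tinv * a = tinv * a * (t * tinv)" using t_tinv by simp
  also have "\<dots> = tinv * (a * t) * tinv" by (simp add: mult.assoc)
  also have "\<dots> = tinv * (t * a) * tinv" using t_central by simp
  also have "\<dots> = a * tinv" using t_tinv by (simp add: mult.assoc[symmetric])
  finally show ?thesis .
qed

lemma tinv_mult_left_commute: "a * (tinv * b) = tinv * (a * b)"
proof -
  have "a * (tinv * b) = (a * tinv) * b" by (simp add: mult.assoc)
  also have "\<dots> = (tinv * a) * b" by (simp only: tinv_commute)
  finally show ?thesis by (simp add: mult.assoc)
qed

lemma T_commute_X_X_Suc:
  assumes i: "i \<in> {1..<n}"
  shows "T i * (X i * X (Suc i)) = (X i * X (Suc i)) * T i"
proof -
  have x1: "X (Suc i) = tinv * (T i * X i * T i)" using T_X_T[OF i] t_tinv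
    by (simp add: mult.assoc[symmetric])
  have key: "T i * X i * T i * X i = X i * T i * X i * T i"
  proof -
    have "T i * X i * T i * X i = t * (X (Suc i) * X i)" using T_X_T[OF i] by (simp add: mult.assoc)
    also have "\<dots> = t * (X i * X (Suc i))" using X_commute[of "Suc i" i] i by simp
    also have "\<dots> = X i * (t * X (Suc i))" using t_central[of "X i"]
      by (simp add: mult.assoc[symmetric])
    also have "\<dots> = X i * T i * X i * T i" using T_X_T[OF i] by (simp add: mult.assoc)
    finally show ?thesis .
  qed
  have "T i * (X i * X (Suc i)) = tinv * (T i * X i * T i * X i * T i)"
    unfolding x1 by (simp add: mult.assoc tinv_mult_left_commute)
  also have "\<dots> = tinv * (X i * T i * X i * T i * T i)" using key by simp
  also have "\<dots> = (X i * X (Suc i)) * T i"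
    unfolding x1 by (simp add: mult.assoc tinv_mult_left_commute)
  finally show ?thesis .
qed

lemma T_commute_Xcol_prefix:
  assumes j: "j \<in> {1..<n}" and jl: "j \<noteq> l" and l: "l \<le> n"
  shows "T j * Xcol X {1..l} = Xcol X {1..l} * T j"
proof (cases "l < j")
  case True
  then show ?thesis using j l by (intro T_commute_Xcol) auto
next
  case False
  then have jl': "Suc j \<le> l" using jl by simp
  let ?R = "{1..l} - {j} - {Suc j}"
  have "Xcol X {1..l} = X j * Xcol X ({1..l} - {j})" using j jl' l by (intro Xcol_remove) auto
  also have "Xcol X ({1..l} - {j}) = X (Suc j) * Xcol X ?R" using j jl' l
    by (intro Xcol_remove) auto
  finally have e: "Xcol X {1..l} = (X j * X (Suc j)) * Xcol X ?R" by (simp add: mult.assoc)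
  have c: "T j * Xcol X ?R = Xcol X ?R * T j" using j l by (intro T_commute_Xcol) auto
  have "T j * Xcol X {1..l} = (T j * (X j * X (Suc j))) * Xcol X ?R" unfolding e
    by (simp add: mult.assoc)
  also have "\<dots> = (X j * X (Suc j)) * (T j * Xcol X ?R)" using T_commute_X_X_Suc[OF j]
    by (simp add: mult.assoc)
  also have "\<dots> = Xcol X {1..l} * T j" unfolding e c by (simp add: mult.assoc)
  finally show ?thesis .
qed

lemma sref_image: "i \<in> A \<Longrightarrow> Suc i \<notin> A \<Longrightarrow> sref i ` A = insert (Suc i) (A - {i})"
  by (auto simp: sref_apply image_iff)

lemma T_mult_Xcol:
  assumes i: "i \<in> {1..<n}" and A: "finite A" "A \<subseteq> {1..n}" and iA: "i \<in> A" and siA: "Suc i \<notin> A"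
  shows "T i * Xcol X A = Xcol X (sref i ` A) * (T i + 1 - t)"
proof -
  let ?R = "A - {i}"
  have e1: "Xcol X A = X i * Xcol X ?R" by (rule Xcol_remove[OF A iA])
  have e2: "Xcol X (sref i ` A) = X (Suc i) * Xcol X ?R"
  proof -
    have "Xcol X (insert (Suc i) ?R) = X (Suc i) * Xcol X (insert (Suc i) ?R - {Suc i})"
      using A i by (intro Xcol_remove) auto
    moreover have "insert (Suc i) ?R - {Suc i} = ?R" using siA by auto
    ultimately show ?thesis using sref_image[OF iA siA] by simp
  qed
  have c: "T i * Xcol X ?R = Xcol X ?R * T i" using i A siA by (intro T_commute_Xcol) auto
  have c2: "(T i + 1 - t) * Xcol X ?R = Xcol X ?R * (T i + 1 - t)"
    using c t_central[of "Xcol X ?R"] by (simp add: algebra_simps)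
  have "T i * Xcol X A = (T i * X i) * Xcol X ?R" unfolding e1 by (simp add: mult.assoc)
  also have "\<dots> = X (Suc i) * ((T i + 1 - t) * Xcol X ?R)" unfolding T_mult_X[OF i]
    by (simp add: mult.assoc)
  also have "\<dots> = Xcol X (sref i ` A) * (T i + 1 - t)" unfolding c2 e2 by (simp add: mult.assoc)
  finally show ?thesis .
qed

lemma Xpow_varpi:
  assumes l: "l \<le> n"
  shows "Xpow n X (varpi l) = Xcol X {1..l}"
proof -
  have s: "sorted_list_of_set {1..l} = [1..<Suc l]"
    by (metis atLeastLessThanSuc_atLeastAtMost sorted_list_of_set_range)
  have u: "[1..<Suc n] = [1..<Suc l] @ [Suc l..<Suc n]" using l
    by (metis Suc_le_mono le_add1 le_add_diff_inverse plus_1_eq_Suc upt_add_eq_append)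
  have m1: "map (\<lambda>i. X i ^ nat (varpi l i)) [1..<Suc l] = map X [1..<Suc l]"
    by (rule map_cong) (auto simp: varpi_def)
  have m2: "map (\<lambda>i. X i ^ nat (varpi l i)) [Suc l..<Suc n] = map (\<lambda>_. 1) [Suc l..<Suc n]"
    by (rule map_cong) (auto simp: varpi_def)
  have p1: "prod_list (map (\<lambda>_. 1::'a) xs) = 1" for xs :: "nat list" by (induction xs) auto
  show ?thesis unfolding Xpow_def Xcol_def s u
    by (simp only: map_append prod_list.append m1 m2 p1) simp
qed

lemma prod_T_mult_Xcol_prefix:
  assumes l: "l \<le> n"
  shows "reduced_word n v a \<Longrightarrow> min_coset_rep n l v \<Longrightarrow>
    prod_list (map T a) * Xcol X {1..l} = Xcol X (v ` {1..l}) * prod_list (map (\<lambda>j. T j + 1 - t) a)"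
proof (induction a arbitrary: v)
  case Nil
  then have "v = id" by (simp add: reduced_word_def)
  then show ?case by simp
next
  case (Cons j a)
  let ?v = "sref j \<circ> v"
  have g': "min_coset_rep n l ?v" and ra: "reduced_word n ?v a"
    using min_coset_rep_reduced_word_ConsD[OF Cons.prems] by auto
  have IH: "prod_list (map T a) * Xcol X {1..l}
      = Xcol X (?v ` {1..l}) * prod_list (map (\<lambda>j. T j + 1 - t) a)"
    using Cons.IH[OF ra g'] .
  have j: "j \<in> {1..<n}" using reduced_word_letters[OF Cons.prems(1)] by auto
  let ?A = "?v ` {1..l}"
  have As: "?A \<subseteq> {1..n}" by (rule image_prefix_subset[OF reduced_word_in_perms[OF ra] l])
  have jA: "j \<in> ?A" and sjA: "Suc j \<notin> ?A"
    using min_coset_rep_reduced_word_ConsD_image[OF Cons.prems l] by auto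
  have img: "sref j ` ?A = v ` {1..l}" by (simp add: image_comp comp_assoc sref_def)
  have "prod_list (map T (j # a)) * Xcol X {1..l} = T j * (prod_list (map T a) * Xcol X {1..l})"
    by (simp add: mult.assoc)
  also have "\<dots> = (T j * Xcol X ?A) * prod_list (map (\<lambda>j. T j + 1 - t) a)"
    unfolding IH by (simp add: mult.assoc)
  also have "\<dots> = Xcol X (v ` {1..l}) * prod_list (map (\<lambda>j. T j + 1 - t) (j # a))"
    unfolding T_mult_Xcol[OF j finite_imageI[OF finite_atLeastAtMost] As jA sjA] img
    by (simp add: mult.assoc)
  finally show ?case .
qed

lemma letter_notin_reduced_word_stab:
  assumes l: "l \<in> {1..n}"
  shows "reduced_word n y a \<Longrightarrow> preserves_prefix n l y \<Longrightarrow> l \<notin> set a"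
proof (induction a arbitrary: y)
  case Nil then show ?case by simp
next
  case (Cons j a)
  have yp: "y \<in> perms n" using reduced_word_in_perms[OF Cons.prems(1)] .
  have j: "j \<in> {1..<n}" using reduced_word_letters[OF Cons.prems(1)] by auto
  have d: "inv y (Suc j) < inv y j" by (rule descent_of_reduced_word[OF Cons.prems(1)])
  have jl: "j \<noteq> l"
  proof
    assume jl: "j = l"
    have bi: "preserves_prefix n l (inv y)" using preserves_prefix_inv[OF yp Cons.prems(2)] .
    have "inv y l \<le> l" using bi l unfolding preserves_prefix_def by auto
    moreover have "\<not> inv y (Suc l) \<le> l" using bi j jl unfolding preserves_prefix_def by auto
    ultimately show False using d jl by simp
  qed
  have sl: "(sref j z \<le> l) = (z \<le> l)" for z
    using jl unfolding sref_apply by (cases "z = j"; cases "z = Suc j") auto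
  have b': "preserves_prefix n l (sref j \<circ> y)"
    using Cons.prems(2) unfolding preserves_prefix_def by (simp add: sl)
  have "l \<notin> set a" using Cons.IH[OF reduced_word_ConsD(1)[OF Cons.prems(1)] b'] .
  then show ?case using jl by simp
qed

lemma prod_T_commute_Xcol_prefix:
  assumes l: "l \<in> {1..n}"
  shows "set a \<subseteq> {1..<n} - {l} \<Longrightarrow>
    prod_list (map T a) * Xcol X {1..l} = Xcol X {1..l} * prod_list (map T a)"
proof (induction a)
  case Nil then show ?case by simp
next
  case (Cons j a)
  have c: "T j * Xcol X {1..l} = Xcol X {1..l} * T j" using Cons.prems l
    by (intro T_commute_Xcol_prefix) auto
  have "prod_list (map T (j # a)) * Xcol X {1..l} = T j * (Xcol X {1..l} * prod_list (map T a))"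
    using Cons by (simp add: mult.assoc)
  also have "\<dots> = Xcol X {1..l} * prod_list (map T (j # a))" using c
    by (simp add: mult.assoc[symmetric])
  finally show ?case .
qed

lemma ev_Hstab_commute_Xcol_prefix:
  assumes l: "l \<in> {1..n}" and g: "in_Hstab n (varpi l) g"
  shows "ev n t T g * Xcol X {1..l} = Xcol X {1..l} * ev n t T g"
  unfolding ev_def sum_distrib_left sum_distrib_right
proof (rule sum.cong[OF refl])
  fix w assume w: "w \<in> perms n"
  show "evp t (g w) * Tw n T w * Xcol X {1..l} = Xcol X {1..l} * (evp t (g w) * Tw n T w)"
  proof (cases "g w = 0")
    case True then show ?thesis by simp
  next
    case False
    then have ws: "w \<in> stab n (varpi l)" using g by (simp add: in_Hstab_def)
    then have b: "preserves_prefix n l w" using stab_varpi_iff by auto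
    have r: "reduced_word n w (rword n w)" by (rule reduced_word_rword[OF w])
    have "l \<notin> set (rword n w)" by (rule letter_notin_reduced_word_stab[OF l r b])
    then have "set (rword n w) \<subseteq> {1..<n} - {l}" using reduced_word_letters[OF r] by auto
    then have c: "Tw n T w * Xcol X {1..l} = Xcol X {1..l} * Tw n T w"
      unfolding Tw_def by (rule prod_T_commute_Xcol_prefix[OF l])
    have "evp t (g w) * Tw n T w * Xcol X {1..l} = evp t (g w) * (Xcol X {1..l} * Tw n T w)"
      using c by (simp add: mult.assoc)
    also have "\<dots> = Xcol X {1..l} * (evp t (g w) * Tw n T w)"
      using evp_commute[of "g w" "Xcol X {1..l}"] by (simp add: mult.assoc[symmetric])
    finally show ?thesis .
  qed
qed

lemma Tw_ucol_mult_Xcol_prefix: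
  assumes C: "C \<in> cols n l"
  shows "Tw n T (ucol n C) * Xcol X {1..l}
    = Xcol X C * prod_list (map (\<lambda>j. T j + 1 - t) (rword n (ucol n C)))"
proof -
  interpret column n l C by (rule column.intro[OF C])
  show ?thesis
    unfolding Tw_def using prod_T_mult_Xcol_prefix[OF l_le_n reduced_word_rword[OF ucol_in_perms]
      ucol_min_coset_rep] ucol_image_prefix by simp
qed

lemma ev_mult_Xcol_prefix:
  assumes supp: "\<And>w. w \<notin> perms n \<Longrightarrow> h w = 0" and l: "l \<in> {1..n}"
  shows "ev n t T h * Xcol X {1..l}
    = (\<Sum>C\<in>cols n l. Xcol X C * ev n t T (lmulTbarw n (ucol n C) (decomp n l h C)))"
proof -
  have ln: "l \<le> n" using l by simp
  have "ev n t T h = ev n t T (\<lambda>w. \<Sum>F\<in>cols n l. lmulTw n (ucol n F) (coset_coeffs n l h F) w)"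
    by (rule arg_cong[where f = "ev n t T"]) (rule sum_lmulTw_coset_coeffs[OF supp ln])
  also have "\<dots> = (\<Sum>F\<in>cols n l. Tw n T (ucol n F) * ev n t T (coset_coeffs n l h F))"
    unfolding ev_sum by (rule sum.cong[OF refl]) (simp add: ev_lmulTw ucol_perms)
  finally have "ev n t T h * Xcol X {1..l}
      = (\<Sum>F\<in>cols n l. Tw n T (ucol n F) * (ev n t T (coset_coeffs n l h F) * Xcol X {1..l}))"
    by (simp add: sum_distrib_right mult.assoc)
  also have "\<dots>
      = (\<Sum>F\<in>cols n l. (Tw n T (ucol n F) * Xcol X {1..l}) * ev n t T (coset_coeffs n l h F))"
    using ev_Hstab_commute_Xcol_prefix[OF l coset_coeffs_Hstab] by (simp add: mult.assoc)
  also have "\<dots> = (\<Sum>C\<in>cols n l. Xcol X C * ev n t T (lmulTbarw n (ucol n C) (coset_coeffs n l h C)))"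
    by (intro sum.cong refl)
      (simp only: Tw_ucol_mult_Xcol_prefix ev_lmulTbarw[OF ucol_perms] mult.assoc)
  finally show ?thesis by (simp add: decomp_eq_coset_coeffs[OF supp ln])
qed

end

section \<open>The Gale order and the vanishing of \<open>\<Psi>\<close>: part (a)\<close>

definition count_le :: "nat set \<Rightarrow> nat \<Rightarrow> nat" where
  "count_le A m = card {x \<in> A. x \<le> m}"

text \<open>For columns with \<open>card B \<le> card A\<close>, \<open>gale_le A B\<close> says that the \<open>k\<close>-th entry of \<open>A\<close> is at
  most the \<open>k\<close>-th entry of \<open>B\<close> for every \<open>k \<le> card B\<close> (\<open>gale_le_entry_le\<close>).\<close>

definition gale_le :: "nat set \<Rightarrow> nat set \<Rightarrow> bool" where
  "gale_le A B \<longleftrightarrow> (\<forall>m. count_le B m \<le> count_le A m)"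

lemma sref_le_iff: "m \<noteq> j \<Longrightarrow> (sref j x \<le> m) = (x \<le> m)"
  unfolding sref_apply by (cases "x = j"; cases "x = Suc j") auto

lemma count_le_sref_image:
  assumes "m \<noteq> j"
  shows "count_le (sref j ` A) m = count_le A m"
proof -
  have "{x \<in> sref j ` A. x \<le> m} = sref j ` {x \<in> A. x \<le> m}"
    using sref_le_iff[OF assms] by auto
  then show ?thesis unfolding count_le_def using inj_sref
    by (simp add: card_image inj_on_subset[of _ UNIV])
qed

lemma count_le_sref_image_self:
  assumes j: "1 \<le> j" and f: "finite A"
  shows "count_le (sref j ` A) j = count_le A (j - 1) + (if Suc j \<in> A then 1 else 0)"
proof -
  have e: "{x \<in> sref j ` A. x \<le> j} = {x \<in> A. x \<le> j - 1} \<union> (if Suc j \<in> A then {j} else {})"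
  proof (rule set_eqI)
    fix z
    show "z \<in> {x \<in> sref j ` A. x \<le> j} \<longleftrightarrow> z \<in> {x \<in> A. x \<le> j - 1} \<union> (if Suc j \<in> A then {j} else {})"
    proof
      assume "z \<in> {x \<in> sref j ` A. x \<le> j}"
      then obtain x where x: "x \<in> A" "z = sref j x" "z \<le> j" by auto
      then show "z \<in> {x \<in> A. x \<le> j - 1} \<union> (if Suc j \<in> A then {j} else {})"
        using j by (auto simp: sref_apply split: if_splits)
    next
      assume a: "z \<in> {x \<in> A. x \<le> j - 1} \<union> (if Suc j \<in> A then {j} else {})"
      show "z \<in> {x \<in> sref j ` A. x \<le> j}"
      proof (cases "z \<in> {x \<in> A. x \<le> j - 1}")
        case True
        then have "sref j z = z" using j by (auto simp: sref_apply)
        then show ?thesis using True j by (auto intro: image_eqI[of z _ z])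
      next
        case False
        then have "Suc j \<in> A" "z = j" using a by (auto split: if_splits)
        moreover have "sref j (Suc j) = j" by (simp add: sref_apply)
        ultimately show ?thesis by (auto intro: image_eqI[of j _ "Suc j"])
      qed
    qed
  qed
  have d: "{x \<in> A. x \<le> j - 1} \<inter> (if Suc j \<in> A then {j} else {}) = {}" using j by auto
  show ?thesis unfolding count_le_def e
    by (subst card_Un_disjoint) (use f d in auto)
qed

lemma count_le_mono: "finite A \<Longrightarrow> m \<le> m' \<Longrightarrow> count_le A m \<le> count_le A m'"
  unfolding count_le_def by (rule card_mono) auto

lemma gale_le_subset: "finite B \<Longrightarrow> A \<subseteq> B \<Longrightarrow> gale_le A C \<Longrightarrow> gale_le B C"
proof -
  assume B: "finite B" and AB: "A \<subseteq> B" and AC: "gale_le A C"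
  have "count_le A m \<le> count_le B m" for m
    unfolding count_le_def using B AB by (intro card_mono) auto
  then show "gale_le B C" using AC unfolding gale_le_def using order_trans by blast
qed

lemma gale_le_sref_image_right:
  assumes j: "1 \<le> j" and fA: "finite A" and fB: "finite B" and sjB: "Suc j \<notin> B"
    and le: "gale_le A B"
  shows "gale_le A (sref j ` B)"
  unfolding gale_le_def
proof
  fix m
  show "count_le (sref j ` B) m \<le> count_le A m"
  proof (cases "m = j")
    case False then show ?thesis using count_le_sref_image[OF False] le by (simp add: gale_le_def)
  next
    case True
    have "count_le (sref j ` B) j = count_le B (j - 1)"
      using count_le_sref_image_self[OF j fB] sjB by simp
    also have "\<dots> \<le> count_le A (j - 1)" using le by (simp add: gale_le_def)
    also have "\<dots> \<le> count_le A j" by (rule count_le_mono[OF fA]) simp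
    finally show ?thesis using True by simp
  qed
qed

lemma gale_le_sref_image:
  assumes j: "1 \<le> j" and fA: "finite A" and fB: "finite B" and sjB: "Suc j \<notin> B"
    and le: "gale_le A B"
  shows "gale_le (sref j ` A) (sref j ` B)"
  unfolding gale_le_def
proof
  fix m
  show "count_le (sref j ` B) m \<le> count_le (sref j ` A) m"
  proof (cases "m = j")
    case False then show ?thesis using count_le_sref_image[OF False] le by (simp add: gale_le_def)
  next
    case True
    have "count_le (sref j ` B) j = count_le B (j - 1)"
      using count_le_sref_image_self[OF j fB] sjB by simp
    also have "\<dots> \<le> count_le A (j - 1)" using le by (simp add: gale_le_def)
    also have "\<dots> \<le> count_le (sref j ` A) j" using count_le_sref_image_self[OF j fA] by simp
    finally show ?thesis using True by simp
  qed
qed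

fun subword_perms :: "nat list \<Rightarrow> (nat \<Rightarrow> nat) set" where
  "subword_perms [] = {id}"
| "subword_perms (j # a) = subword_perms a \<union> (\<lambda>p. sref j \<circ> p) ` subword_perms a"

lemma lmulTbar_nonzero: "lmulTbar n j h w \<noteq> 0 \<Longrightarrow> h w \<noteq> 0 \<or> h (sref j \<circ> w) \<noteq> 0"
  by (auto simp: lmulTbar_def lmulT_def split: if_splits)

lemma foldr_lmulTbar_support:
  "foldr (lmulTbar n) a g w \<noteq> 0 \<Longrightarrow> \<exists>p\<in>subword_perms a. \<exists>y. g y \<noteq> 0 \<and> w = p \<circ> y"
proof (induction a arbitrary: w)
  case Nil then show ?case by auto
next
  case (Cons j a)
  from lmulTbar_nonzero[OF Cons.prems[simplified]]
  show ?case
  proof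
    assume "foldr (lmulTbar n) a g w \<noteq> 0"
    then obtain p y where p: "p \<in> subword_perms a" "g y \<noteq> 0" "w = p \<circ> y" using Cons.IH by blast
    have "p \<in> subword_perms (j # a)" using p(1) by simp
    then show ?thesis using p(2,3) by blast
  next
    assume "foldr (lmulTbar n) a g (sref j \<circ> w) \<noteq> 0"
    then obtain p y where p: "p \<in> subword_perms a" "g y \<noteq> 0" "sref j \<circ> w = p \<circ> y" using Cons.IH
      by blast
    then have w: "w = (sref j \<circ> p) \<circ> y" by (metis comp_assoc sref_comp_sref)
    have "sref j \<circ> p \<in> subword_perms (j # a)" using p(1) by simp
    then show ?thesis using p(2) w by blast
  qed
qed

lemma gale_le_subword_perm:
  assumes d: "d \<le> n"
  shows "reduced_word n v a \<Longrightarrow> min_coset_rep n d v \<Longrightarrow> p \<in> subword_perms a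
    \<Longrightarrow> gale_le (p ` {1..d}) (v ` {1..d})"
proof (induction a arbitrary: v p)
  case Nil
  then have "v = id" "p = id" by (auto simp: reduced_word_def)
  then show ?case by (simp add: gale_le_def)
next
  case (Cons j a)
  let ?v = "sref j \<circ> v" and ?B = "(sref j \<circ> v) ` {1..d}"
  have g': "min_coset_rep n d ?v" and ra: "reduced_word n ?v a"
    using min_coset_rep_reduced_word_ConsD[OF Cons.prems(1,2)] by auto
  have sjB: "Suc j \<notin> ?B" using min_coset_rep_reduced_word_ConsD_image[OF Cons.prems(1,2) d] by blast
  have j1: "1 \<le> j" using reduced_word_letters[OF Cons.prems(1)] by auto
  have vB: "v ` {1..d} = sref j ` ?B" by (simp add: image_comp comp_assoc sref_def)
  from Cons.prems(3)
  consider "p \<in> subword_perms a" | p' where "p' \<in> subword_perms a" "p = sref j \<circ> p'"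
    by auto
  then show ?case
  proof cases
    case 1
    with gale_le_sref_image_right[OF j1 _ _ sjB Cons.IH[OF ra g']] show ?thesis unfolding vB by simp
  next
    case (2 p')
    with gale_le_sref_image[OF j1 _ _ sjB Cons.IH[OF ra g' 2(1)]] show ?thesis
      unfolding vB by (simp add: image_comp)
  qed
qed

lemma le_count_le_entry:
  assumes f: "finite A" and k: "1 \<le> k" "k \<le> card A"
  shows "k \<le> count_le A (entry A k)"
proof -
  let ?xs = "sorted_list_of_set A"
  have len: "length ?xs = card A" by simp
  have sw: "sorted_wrt (<) ?xs" by (rule strict_sorted_list_of_set)
  have sub: "set (take k ?xs) \<subseteq> {x \<in> A. x \<le> entry A k}"
  proof
    fix x assume "x \<in> set (take k ?xs)"
    then obtain i where i: "i < length (take k ?xs)" "take k ?xs ! i = x" by (metis in_set_conv_nth)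
    then have ik: "i < k" "i < length ?xs" by auto
    have xi: "x = ?xs ! i" using i by simp
    have "x \<in> A" using xi ik f by (metis nth_mem set_sorted_list_of_set)
    moreover have "?xs ! i \<le> ?xs ! (k - 1)"
    proof (cases "i = k - 1")
      case True then show ?thesis by simp
    next
      case False
      then have "i < k - 1" using ik by simp
      moreover have "k - 1 < length ?xs" using k len by simp
      ultimately show ?thesis using sorted_wrt_nth_less[OF sw] by fastforce
    qed
    ultimately show "x \<in> {x \<in> A. x \<le> entry A k}" using xi by (simp add: entry_def)
  qed
  have "card (set (take k ?xs)) = k"
    using k len by (simp add: distinct_card)
  then show ?thesis unfolding count_le_def using card_mono[OF _ sub] f by simp
qed

lemma entry_le_of_le_count_le:
  assumes f: "finite A" and k: "1 \<le> k" "k \<le> card A" and c: "k \<le> count_le A m"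
  shows "entry A k \<le> m"
proof (rule ccontr)
  assume "\<not> entry A k \<le> m"
  let ?xs = "sorted_list_of_set A"
  have gt: "m < ?xs ! (k - 1)" using \<open>\<not> entry A k \<le> m\<close> by (simp add: entry_def)
  have len: "length ?xs = card A" by simp
  have sw: "sorted_wrt (<) ?xs" by (rule strict_sorted_list_of_set)
  have sub: "{x \<in> A. x \<le> m} \<subseteq> set (take (k - 1) ?xs)"
  proof
    fix x assume x: "x \<in> {x \<in> A. x \<le> m}"
    then have "x \<in> set ?xs" using f by simp
    then obtain i where i: "i < length ?xs" "?xs ! i = x" by (metis in_set_conv_nth)
    have "i < k - 1"
    proof (rule ccontr)
      assume "\<not> i < k - 1"
      then have "?xs ! (k - 1) \<le> ?xs ! i"
        using sorted_wrt_nth_less[OF sw, of "k - 1" i] i by (cases "i = k - 1") auto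
      then show False using gt x i by auto
    qed
    then show "x \<in> set (take (k - 1) ?xs)" using i
      by (metis in_set_conv_nth length_take min_less_iff_conj nth_take)
  qed
  have "card (set (take (k - 1) ?xs)) \<le> k - 1"
    by (metis card_length length_take min.boundedE order.refl)
  then have "count_le A m \<le> k - 1" unfolding count_le_def using card_mono[OF _ sub]
    by (meson List.finite_set le_trans)
  then show False using c k by simp
qed

lemma gale_le_entry_le:
  assumes fC: "finite C" and fD: "finite D" and cd: "card D \<le> card C"
    and le: "gale_le C D" and k: "k \<in> {1..card D}"
  shows "entry C k \<le> entry D k"
proof -
  have "k \<le> count_le D (entry D k)" using le_count_le_entry[OF fD] k by auto
  also have "\<dots> \<le> count_le C (entry D k)" using le by (simp add: gale_le_def)
  finally show ?thesis using entry_le_of_le_count_le[OF fC] k cd by auto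
qed

definition perm_supported :: "nat \<Rightarrow> hn \<Rightarrow> bool" where
  "perm_supported n h \<longleftrightarrow> (\<forall>w. w \<notin> perms n \<longrightarrow> h w = 0)"

text \<open>A list of columns of weakly decreasing lengths, i.e. a tableau except that the empty list
  and empty columns are allowed.\<close>

definition weak_tableau :: "nat \<Rightarrow> nat set list \<Rightarrow> bool" where
  "weak_tableau n Ts \<longleftrightarrow> (\<forall>C\<in>set Ts. C \<subseteq> {1..n}) \<and> sorted_wrt (\<lambda>A B. card B \<le> card A) Ts"

lemma card_le_of_subset_atLeastAtMost: "C \<subseteq> {1..n} \<Longrightarrow> card C \<le> n"
  using card_mono[of "{1..n}" C] by simp

lemma in_cols_card: "C \<subseteq> {1..n} \<Longrightarrow> C \<in> cols n (card C)"
  by (simp add: cols_def)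

lemma one_stab_Hstab: "in_Hstab n lam (one_stab n lam)"
  by (simp add: in_Hstab_def one_stab_def)

lemma perm_supported_Hstab: "in_Hstab n lam g \<Longrightarrow> perm_supported n g"
  by (auto simp: in_Hstab_def perm_supported_def stab_def)

lemma perm_supported_lmulTbarw: "perm_supported n h \<Longrightarrow> perm_supported n (lmulTbarw n u h)"
proof -
  have "perm_supported n h \<Longrightarrow> perm_supported n (foldr (lmulTbar n) a h)" for a
    by (induction a) (auto simp: perm_supported_def lmulTbar_def lmulT_def)
  then show "perm_supported n h \<Longrightarrow> perm_supported n (lmulTbarw n u h)"
    by (simp add: lmulTbarw_def)
qed

lemma lmulTbarw_zero: "lmulTbarw n u (\<lambda>_. 0) = (\<lambda>_. 0)"
proof -
  have z: "lmulTbar n i (\<lambda>_. 0) = (\<lambda>_. 0)" for i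
    by (rule ext) (simp add: lmulTbar_def lmulT_def)
  have "foldr (lmulTbar n) a (\<lambda>_. 0) = (\<lambda>_. 0)" for a
    by (induction a) (simp_all add: z)
  then show ?thesis by (simp add: lmulTbarw_def)
qed

lemma perm_supported_Psi: "\<forall>C\<in>set Ts. C \<subseteq> {1..n} \<Longrightarrow> perm_supported n (Psi n Ts)"
proof (induction n Ts rule: Psi.induct)
  case (1 n) then show ?case by (simp add: perm_supported_def one0_def)
next
  case (2 n C)
  then show ?case using perm_supported_lmulTbarw[OF perm_supported_Hstab[OF one_stab_Hstab]] by simp
next
  case (3 n C D S)
  then have "decomp n (card C) (Psi n (D # S)) = coset_coeffs n (card C) (Psi n (D # S))"
    by (intro decomp_eq_coset_coeffs)
      (auto simp: perm_supported_def card_le_of_subset_atLeastAtMost)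
  then show ?case using perm_supported_lmulTbarw[OF perm_supported_Hstab[OF coset_coeffs_Hstab]]
    by simp
qed

lemma decomp_Psi:
  assumes "\<forall>E\<in>set (C # Ts). E \<subseteq> {1..n}"
  shows "decomp n (card C) (Psi n Ts) = coset_coeffs n (card C) (Psi n Ts)"
  using assms perm_supported_Psi[of Ts n]
  by (intro decomp_eq_coset_coeffs) (auto simp: perm_supported_def card_le_of_subset_atLeastAtMost)

lemma Psi_Cons_eq:
  assumes "\<forall>E\<in>set (C # Ts). E \<subseteq> {1..n}"
  shows "Psi n (C # Ts) = lmulTbarw n (ucol n C)
    (if Ts = [] then one_stab n (varpi (card C)) else coset_coeffs n (card C) (Psi n Ts) C)"
  using decomp_Psi[OF assms] by (cases Ts) auto

lemma Psi_Cons_form: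
  assumes "\<forall>C\<in>set (D # S). C \<subseteq> {1..n}"
  shows "\<exists>g. in_Hstab n (varpi (card D)) g \<and> Psi n (D # S) = lmulTbarw n (ucol n D) g"
  using one_stab_Hstab coset_coeffs_Hstab
  by (intro exI[of _ "if S = [] then one_stab n (varpi (card D))
      else coset_coeffs n (card D) (Psi n S) D"])
    (simp add: Psi_Cons_eq[OF assms])

lemma semistandard_Cons_Cons:
  "semistandard (C # D # S) \<longleftrightarrow> (\<forall>k\<in>{1..card D}. entry C k \<le> entry D k) \<and> semistandard (D # S)"
  unfolding semistandard_def by (simp add: All_less_Suc2)

text \<open>\<open>\<Psi>(D # S)\<close> is \<open>lmulTbarw n (ucol n D) g\<close> with \<open>g \<in> H\<^sub>n\<^sub>,\<^sub>d\<close>, so a nonzero coefficient at \<open>w\<close>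
  forces \<open>w = p z\<close> with \<open>p\<close> a subword product of \<open>u\<^sub>D\<close> and \<open>z \<in> S\<^sub>n\<^sub>,\<^sub>d\<close>; hence
  \<open>w{1..d} = p{1..d}\<close>.\<close>

lemma gale_le_of_Psi_Cons_nonzero:
  assumes cols: "\<forall>E\<in>set (D # S). E \<subseteq> {1..n}" and nz: "Psi n (D # S) w \<noteq> 0"
  shows "gale_le (w ` {1..card D}) D"
proof -
  let ?d = "card D"
  have Dc: "D \<in> cols n ?d" and d: "?d \<le> n"
    using cols by (auto simp: in_cols_card card_le_of_subset_atLeastAtMost)
  obtain g where g: "in_Hstab n (varpi ?d) g" and pf: "Psi n (D # S) = lmulTbarw n (ucol n D) g"
    using Psi_Cons_form[OF cols] by auto
  from nz pf have "foldr (lmulTbar n) (rword n (ucol n D)) g w \<noteq> 0"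
    by (simp add: lmulTbarw_def)
  from foldr_lmulTbar_support[OF this] obtain p z where p: "p \<in> subword_perms (rword n (ucol n D))"
    and gz: "g z \<noteq> 0" and w: "w = p \<circ> z" by blast
  have "z \<in> perms n" and "preserves_prefix n ?d z"
    using g gz stab_varpi_iff by (auto simp: in_Hstab_def)
  then have "z ` {1..?d} = {1..?d}" by (rule preserves_prefix_image[OF _ _ d])
  then have "w ` {1..?d} = p ` {1..?d}" unfolding w image_comp[symmetric] by simp
  moreover interpret D: column n ?d D by (rule column.intro[OF Dc])
  have "gale_le (p ` {1..?d}) (ucol n D ` {1..?d})"
    using gale_le_subword_perm[OF d reduced_word_rword[OF D.ucol_in_perms] D.ucol_min_coset_rep p] .
  ultimately show ?thesis by (metis D.ucol_image_prefix)
qed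

lemma Psi_vanishes_on_violating_coset:
  assumes cols: "\<forall>E\<in>set (C # D # S). E \<subseteq> {1..n}" and cd: "card D \<le> card C"
    and k: "k \<in> {1..card D}" and viol: "entry D k < entry C k"
    and y: "y \<in> stab n (varpi (card C))"
  shows "Psi n (D # S) (ucol n C \<circ> y) = 0"
proof (rule ccontr)
  assume nz: "Psi n (D # S) (ucol n C \<circ> y) \<noteq> 0"
  have "\<forall>E\<in>set (D # S). E \<subseteq> {1..n}" using cols by simp
  from gale_le_of_Psi_Cons_nonzero[OF this nz]
  have le: "gale_le ((ucol n C \<circ> y) ` {1..card D}) D" .
  have fC: "finite C" and fD: "finite D" using cols finite_subset by auto
  have "(ucol n C \<circ> y) ` {1..card D} \<subseteq> (ucol n C \<circ> y) ` {1..card C}" using cd by auto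
  also have "\<dots> = C" using coset_factor_image[OF in_cols_card y] cols by simp
  finally have "gale_le C D" by (rule gale_le_subset[OF fC _ le])
  then have "entry C k \<le> entry D k" by (rule gale_le_entry_le[OF fC fD cd _ k])
  then show False using viol by simp
qed

lemma Psi_not_semistandard:
  "weak_tableau n Ts \<Longrightarrow> \<not> semistandard Ts \<Longrightarrow> Psi n Ts = (\<lambda>_. 0)"
proof (induction n Ts rule: Psi.induct)
  case (3 n C D S)
  have cols: "\<forall>E\<in>set (C # D # S). E \<subseteq> {1..n}" and cd: "card D \<le> card C"
    and wt: "weak_tableau n (D # S)"
    using 3 by (simp_all add: weak_tableau_def)
  have "coset_coeffs n (card C) (Psi n (D # S)) C = (\<lambda>_. 0)"
  proof (cases "semistandard (D # S)")
    case False
    then show ?thesis using 3 wt by (simp add: coset_coeffs_def)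
  next
    case True
    then obtain k where k: "k \<in> {1..card D}" and viol: "entry D k < entry C k"
      using 3(3) semistandard_Cons_Cons by (meson not_le)
    show ?thesis
      by (rule ext) (auto simp: coset_coeffs_def Psi_vanishes_on_violating_coset[OF cols cd k viol])
  qed
  then show ?case using Psi_Cons_eq[OF cols] by (simp add: lmulTbarw_zero)
qed (simp_all add: semistandard_def)

section \<open>Multiplication by \<open>X\<^sup>\<varpi>\<close>: part (b)\<close>

lemma coset_coeffs_one0:
  assumes C: "C \<in> cols n l"
  shows "coset_coeffs n l (one0 n) C = one_stab n (varpi l)"
proof (rule ext)
  fix y
  show "coset_coeffs n l (one0 n) C y = one_stab n (varpi l) y"
    using comp_in_perms[OF ucol_perms[OF C] stab_in_perms, of y "varpi l"] C
    by (auto simp: coset_coeffs_def one0_def one_stab_def)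
qed

context hecke_algebra
begin

lemma Psi_mult_Xcol_prefix:
  assumes cols: "\<forall>C\<in>set U. C \<subseteq> {1..n}" and l: "l \<in> {1..n}"
  shows "ev n t T (Psi n U) * Xcol X {1..l} = (\<Sum>C\<in>cols n l. Xcol X C * ev n t T (Psi n (C # U)))"
proof -
  have dec: "lmulTbarw n (ucol n C) (decomp n l (Psi n U) C) = Psi n (C # U)"
    if C: "C \<in> cols n l" for C
  proof -
    have l: "card C = l" and cols': "\<forall>E\<in>set (C # U). E \<subseteq> {1..n}"
      using C cols by (auto simp: cols_def)
    then show ?thesis
      using decomp_Psi[OF cols'] Psi_Cons_eq[OF cols'] coset_coeffs_one0[OF C] by (cases U) auto
  qed
  have supp: "\<And>w. w \<notin> perms n \<Longrightarrow> Psi n U w = 0"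
    using perm_supported_Psi[OF cols] by (simp add: perm_supported_def)
  have "ev n t T (Psi n U) * Xcol X {1..l}
      = (\<Sum>C\<in>cols n l. Xcol X C * ev n t T (lmulTbarw n (ucol n C) (decomp n l (Psi n U) C)))"
    by (rule ev_mult_Xcol_prefix[OF supp l])
  also have "\<dots> = (\<Sum>C\<in>cols n l. Xcol X C * ev n t T (Psi n (C # U)))"
    by (intro sum.cong refl) (simp add: dec)
  finally show ?thesis .
qed

lemma Psi_mult_Xpow_varpi:
  "tableau n Ts \<Longrightarrow> l \<in> {1..n} \<Longrightarrow>
    ev n t T (Psi n Ts) * Xpow n X (varpi l) = (\<Sum>C\<in>cols n l. Xcol X C * ev n t T (Psi n (C # Ts)))"
  using Psi_mult_Xcol_prefix Xpow_varpi by (simp add: tableau_def)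

end

section \<open>Tableaux of shape \<open>\<lambda>\<close>\<close>

lemma dominant_antimono:
  assumes d: "dominant n lam" and ij: "1 \<le> i" "i \<le> j" "j \<le> n"
  shows "lam j \<le> lam i"
  using ij
proof (induction j)
  case 0 then show ?case by simp
next
  case (Suc j)
  show ?case
  proof (cases "i = Suc j")
    case True then show ?thesis by simp
  next
    case False
    then have "i \<le> j" using Suc by simp
    then have "lam j \<le> lam i" using Suc by simp
    moreover have "lam (Suc j) \<le> lam j" using d Suc.prems \<open>i \<le> j\<close> by (auto simp: dominant_def)
    ultimately show ?thesis by simp
  qed
qed

lemma down_closed_eq_atLeastAtMost:
  assumes S: "S \<subseteq> {1..n}" and down: "\<And>i j. 1 \<le> i \<Longrightarrow> i \<le> j \<Longrightarrow> j \<in> S \<Longrightarrow> i \<in> S"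
  shows "S = {1..card S}"
proof (cases "S = {}")
  case True then show ?thesis by simp
next
  case False
  have f: "finite S" using S finite_subset by blast
  let ?m = "Max S"
  have mS: "?m \<in> S" using Max_in[OF f False] .
  have "S = {1..?m}"
  proof
    show "S \<subseteq> {1..?m}" using S f by auto
    show "{1..?m} \<subseteq> S" using down mS by auto
  qed
  moreover have "card {1..?m} = ?m" by simp
  ultimately show ?thesis by metis
qed

text \<open>\<open>col_len n \<lambda> j\<close> is the length of the \<open>(j+1)\<close>-st column of \<open>\<lambda>\<close>, and \<open>strip_col \<lambda>\<close> is \<open>\<lambda>\<close>
  with its first column removed.\<close>

definition col_len :: "nat \<Rightarrow> (nat \<Rightarrow> int) \<Rightarrow> nat \<Rightarrow> nat" where
  "col_len n lam j = card {i \<in> {1..n}. int (Suc j) \<le> lam i}"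

lemma col_len_set:
  assumes d: "dominant n lam"
  shows "{i \<in> {1..n}. int (Suc j) \<le> lam i} = {1..col_len n lam j}"
  unfolding col_len_def
  by (rule down_closed_eq_atLeastAtMost) (use dominant_antimono[OF d] in \<open>fastforce\<close>)+

lemma col_len_le: "col_len n lam j \<le> n"
  unfolding col_len_def
  using card_le_of_subset_atLeastAtMost[of "{i \<in> {1..n}. int (Suc j) \<le> lam i}" n] by blast

lemma col_len_antimono: "j \<le> j' \<Longrightarrow> col_len n lam j' \<le> col_len n lam j"
  unfolding col_len_def by (rule card_mono) auto

definition strip_col :: "(nat \<Rightarrow> int) \<Rightarrow> nat \<Rightarrow> int" where
  "strip_col lam = (\<lambda>i. max (lam i - 1) 0)"

lemma col_len_strip_col: "col_len n (strip_col lam) j = col_len n lam (Suc j)"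
proof -
  have "{i \<in> {1..n}. int (Suc j) \<le> strip_col lam i} = {i \<in> {1..n}. int (Suc (Suc j)) \<le> lam i}"
    by (auto simp: strip_col_def)
  then show ?thesis by (simp add: col_len_def)
qed

lemma dominant_strip_col: "dominant n lam \<Longrightarrow> dominant n (strip_col lam)"
  unfolding dominant_def strip_col_def by auto

lemma Btab_col_len: "Btab n lam = {Ts. length Ts = nat (lam 1)
    \<and> (\<forall>j<length Ts. Ts ! j \<in> cols n (col_len n lam j)) \<and> semistandard Ts}"
  by (simp add: Btab_def col_len_def)

lemma Btab_weak_tableau:
  assumes "U \<in> Btab n lam"
  shows "weak_tableau n U"
proof -
  have c: "\<forall>j<length U. U ! j \<in> cols n (col_len n lam j)" using assms by (simp add: Btab_col_len)
  have "\<forall>C\<in>set U. C \<subseteq> {1..n}"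
  proof
    fix C assume "C \<in> set U"
    then obtain i where "i < length U" "U ! i = C" by (metis in_set_conv_nth)
    then show "C \<subseteq> {1..n}" using c by (auto simp: cols_def)
  qed
  moreover have "sorted_wrt (\<lambda>A B. card B \<le> card A) U"
    unfolding sorted_wrt_iff_nth_less using c col_len_antimono by (auto simp: cols_def)
  ultimately show ?thesis by (simp add: weak_tableau_def)
qed

lemma finite_Btab: "finite (Btab n lam)"
proof -
  have "Btab n lam \<subseteq> {xs. set xs \<subseteq> Pow {1..n} \<and> length xs = nat (lam 1)}"
  proof
    fix U assume U: "U \<in> Btab n lam"
    then have "weak_tableau n U" by (rule Btab_weak_tableau)
    then show "U \<in> {xs. set xs \<subseteq> Pow {1..n} \<and> length xs = nat (lam 1)}"
      using U by (auto simp: weak_tableau_def Btab_def)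
  qed
  moreover have "finite {xs. set xs \<subseteq> Pow {1..n} \<and> length xs = nat (lam 1)}"
    by (rule finite_lists_length_eq) simp
  ultimately show ?thesis by (rule finite_subset)
qed

lemma Cons_in_Btab_iff:
  assumes N: "nat (lam 1) = Suc N"
  shows "C # U \<in> Btab n lam \<longleftrightarrow>
    C \<in> cols n (col_len n lam 0) \<and> U \<in> Btab n (strip_col lam) \<and> semistandard (C # U)"
proof -
  have N': "nat (strip_col lam 1) = N" using N by (simp add: strip_col_def)
  have "semistandard (C # U) \<Longrightarrow> semistandard U"
    by (cases U) (auto simp: semistandard_Cons_Cons, simp add: semistandard_def)
  then show ?thesis
    using N N' by (auto simp: Btab_col_len All_less_Suc2 col_len_strip_col)
qed

lemma sum_Btab_Cons:
  fixes F :: "nat set list \<Rightarrow> 'b::comm_monoid_add"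
  assumes N: "nat (lam 1) = Suc N"
    and vanish: "\<And>C U. C \<in> cols n (col_len n lam 0) \<Longrightarrow> U \<in> Btab n (strip_col lam)
      \<Longrightarrow> \<not> semistandard (C # U) \<Longrightarrow> F (C # U) = 0"
  shows "(\<Sum>U\<in>Btab n (strip_col lam). \<Sum>C\<in>cols n (col_len n lam 0). F (C # U)) = (\<Sum>U\<in>Btab n lam. F U)"
proof -
  let ?P = "cols n (col_len n lam 0) \<times> Btab n (strip_col lam)"
  have "(\<Sum>U\<in>Btab n (strip_col lam). \<Sum>C\<in>cols n (col_len n lam 0). F (C # U))
      = (\<Sum>p\<in>?P. F (fst p # snd p))"
    by (subst sum.swap) (simp add: sum.cartesian_product split_beta)
  also have "\<dots> = (\<Sum>p\<in>{p \<in> ?P. semistandard (fst p # snd p)}. F (fst p # snd p))"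
  proof (rule sum.mono_neutral_right)
    show "\<forall>p\<in>?P - {p \<in> ?P. semistandard (fst p # snd p)}. F (fst p # snd p) = 0"
      using vanish by (auto intro: ccontr)
  qed (auto simp: finite_Btab)
  also have "\<dots> = (\<Sum>U\<in>Btab n lam. F U)"
  proof (rule sum.reindex_bij_witness[of _ "\<lambda>U. (hd U, tl U)" "\<lambda>p. fst p # snd p"])
    fix U assume "U \<in> Btab n lam"
    moreover obtain C U' where "U = C # U'"
      using calculation N by (cases U) (auto simp: Btab_col_len)
    ultimately show "fst (hd U, tl U) # snd (hd U, tl U) = U"
      and "(hd U, tl U) \<in> {p \<in> ?P. semistandard (fst p # snd p)}"
      using Cons_in_Btab_iff[of lam N, OF N] by auto
  qed (auto simp: Cons_in_Btab_iff[of lam N, OF N])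
  finally show ?thesis .
qed

lemma weak_tableau_Cons:
  assumes C: "C \<in> cols n (col_len n lam 0)" and U: "U \<in> Btab n (strip_col lam)"
  shows "weak_tableau n (C # U)"
proof -
  have ok: "weak_tableau n U" by (rule Btab_weak_tableau[OF U])
  have c: "\<forall>j<length U. U ! j \<in> cols n (col_len n (strip_col lam) j)" using U
    by (simp add: Btab_col_len)
  have "\<forall>y\<in>set U. card y \<le> card C"
  proof
    fix y assume "y \<in> set U"
    then obtain j where j: "j < length U" "U ! j = y" by (metis in_set_conv_nth)
    then have "card y = col_len n lam (Suc j)" using c by (auto simp: cols_def col_len_strip_col)
    also have "\<dots> \<le> col_len n lam 0" by (rule col_len_antimono) simp
    also have "\<dots> = card C" using C by (simp add: cols_def)
    finally show "card y \<le> card C" .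
  qed
  then show ?thesis using ok C by (auto simp: weak_tableau_def cols_def)
qed

section \<open>Multiplication of \<open>\<one>\<^sub>0\<close> by \<open>X\<^sup>\<lambda>\<close>: part (c)\<close>

lemma prod_list_map_mult_commute:
  fixes f g :: "'c \<Rightarrow> 'b::monoid_mult"
  assumes "\<And>x y. x \<in> set xs \<Longrightarrow> y \<in> set xs \<Longrightarrow> g x * f y = f y * g x"
  shows "prod_list (map (\<lambda>x. f x * g x) xs) = prod_list (map f xs) * prod_list (map g xs)"
  using assms
proof (induction xs)
  case (Cons x xs)
  have "g x * prod_list (map f xs) = prod_list (map f xs) * g x"
    using Cons.prems by (intro commute_prod_list) auto
  then have "g x * (prod_list (map f xs) * prod_list (map g xs))
      = prod_list (map f xs) * (g x * prod_list (map g xs))"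
    by (simp add: mult.assoc[symmetric])
  then show ?case using Cons by (simp add: mult.assoc)
qed simp

lemma Xpow_cong: "(\<And>i. i \<in> {1..n} \<Longrightarrow> mu i = nu i) \<Longrightarrow> Xpow n X mu = Xpow n X nu"
  unfolding Xpow_def by (intro arg_cong[where f = prod_list] map_cong) auto

lemma Xpow_zero: "(\<And>i. i \<in> {1..n} \<Longrightarrow> mu i = 0) \<Longrightarrow> Xpow n X mu = 1"
proof -
  have "prod_list (map (\<lambda>_. 1::'a) xs) = 1" for xs :: "nat list" by (induction xs) auto
  then show "(\<And>i. i \<in> {1..n} \<Longrightarrow> mu i = 0) \<Longrightarrow> Xpow n X mu = 1"
    using Xpow_cong[of n mu "\<lambda>_. 0" X] by (simp add: Xpow_def)
qed

context hecke_algebra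
begin

lemma X_power_commute:
  assumes "i \<in> {1..n}" and "j \<in> {1..n}"
  shows "X i ^ a * X j ^ b = X j ^ b * X i ^ a"
proof -
  have "X i ^ a * X j = X j * X i ^ a"
    by (rule power_commuting_commutes) (rule X_commute[OF assms])
  from this[symmetric] have "X j ^ b * X i ^ a = X i ^ a * X j ^ b"
    by (rule power_commuting_commutes)
  then show ?thesis by (rule sym)
qed

lemma Xpow_add:
  assumes "\<And>i. i \<in> {1..n} \<Longrightarrow> 0 \<le> mu i" and "\<And>i. i \<in> {1..n} \<Longrightarrow> 0 \<le> nu i"
  shows "Xpow n X (\<lambda>i. mu i + nu i) = Xpow n X mu * Xpow n X nu"
proof -
  have "map (\<lambda>i. X i ^ nat (mu i + nu i)) [1..<Suc n]
      = map (\<lambda>i. X i ^ nat (mu i) * X i ^ nat (nu i)) [1..<Suc n]"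
  proof (rule map_cong[OF refl])
    fix i assume "i \<in> set [1..<Suc n]"
    then have "i \<in> {1..n}" by auto
    then show "X i ^ nat (mu i + nu i) = X i ^ nat (mu i) * X i ^ nat (nu i)"
      by (simp add: assms nat_add_distrib power_add)
  qed
  then have "Xpow n X (\<lambda>i. mu i + nu i)
      = prod_list (map (\<lambda>i. X i ^ nat (mu i) * X i ^ nat (nu i)) [1..<Suc n])"
    by (simp only: Xpow_def)
  also have "\<dots> = Xpow n X mu * Xpow n X nu"
    unfolding Xpow_def by (rule prod_list_map_mult_commute) (intro X_power_commute; auto)
  finally show ?thesis .
qed

lemma Xpow_strip_col:
  assumes d: "dominant n lam"
  shows "Xpow n X lam = Xpow n X (strip_col lam) * Xcol X {1..col_len n lam 0}"
proof -
  let ?l = "col_len n lam 0"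
  have "lam i = strip_col lam i + varpi ?l i" if i: "i \<in> {1..n}" for i
  proof -
    have "i \<in> {i \<in> {1..n}. int (Suc 0) \<le> lam i} \<longleftrightarrow> i \<in> {1..?l}"
      by (simp only: col_len_set[OF d])
    then have "(1 \<le> lam i) = (i \<le> ?l)" using i by simp
    moreover have "0 \<le> lam i" using d i by (simp add: dominant_def)
    ultimately show ?thesis by (auto simp: strip_col_def varpi_def max_def)
  qed
  then have "Xpow n X lam = Xpow n X (\<lambda>i. strip_col lam i + varpi ?l i)"
    by (rule Xpow_cong)
  also have "\<dots> = Xpow n X (strip_col lam) * Xpow n X (varpi ?l)"
    by (rule Xpow_add) (simp_all add: strip_col_def varpi_def)
  finally show ?thesis using Xpow_varpi[OF col_len_le] by simp
qed

lemma X_commute_Xcol: "k \<in> {1..n} \<Longrightarrow> C \<subseteq> {1..n} \<Longrightarrow> X k * Xcol X C = Xcol X C * X k"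
  unfolding Xcol_def using finite_subset[of C "{1..n}"] by (intro commute_prod_list X_commute) auto

lemma Xtab_commute_Xcol:
  assumes U: "\<forall>E\<in>set U. E \<subseteq> {1..n}" and C: "C \<subseteq> {1..n}"
  shows "Xtab X U * Xcol X C = Xcol X C * Xtab X U"
proof -
  have "X k * Xtab X U = Xtab X U * X k" if "k \<in> {1..n}" for k
    unfolding Xtab_def using U by (intro commute_prod_list X_commute_Xcol that) auto
  then show ?thesis
    unfolding Xcol_def using finite_subset[OF C] C by (intro commute_prod_list) auto
qed

lemma Xtab_mult_Psi_mult_Xcol_prefix:
  assumes cols: "\<forall>E\<in>set U. E \<subseteq> {1..n}" and l: "l \<in> {1..n}"
  shows "Xtab X U * (ev n t T (Psi n U) * Xcol X {1..l})
    = (\<Sum>C\<in>cols n l. Xtab X (C # U) * ev n t T (Psi n (C # U)))"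
proof -
  have "Xtab X U * Xcol X C = Xtab X (C # U)" if "C \<in> cols n l" for C
    using Xtab_commute_Xcol[OF cols] that by (simp add: Xtab_def cols_def)
  then show ?thesis
    unfolding Psi_mult_Xcol_prefix[OF cols l] sum_distrib_left by (simp add: mult.assoc[symmetric])
qed

lemma one0_mult_Xpow:
  assumes n: "1 \<le> n"
  shows "dominant n lam \<Longrightarrow>
    (\<Sum>w\<in>perms n. Tw n T w) * Xpow n X lam = (\<Sum>U\<in>Btab n lam. Xtab X U * ev n t T (Psi n U))"
proof (induction "nat (lam 1)" arbitrary: lam)
  case 0
  have "lam i = 0" if "i \<in> {1..n}" for i
  proof -
    have "0 \<le> lam i" using 0(2) that by (simp add: dominant_def)
    then show ?thesis using dominant_antimono[OF 0(2), of 1 i] 0(1) that by simp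
  qed
  then have "Xpow n X lam = 1" by (rule Xpow_zero)
  moreover have "Btab n lam = {[]}" using 0(1) by (auto simp: Btab_def semistandard_def)
  ultimately show ?case by (simp add: Xtab_def ev_def one0_def)
next
  case (Suc N)
  let ?l = "col_len n lam 0" and ?lam' = "strip_col lam"
  have IH: "(\<Sum>w\<in>perms n. Tw n T w) * Xpow n X ?lam'
      = (\<Sum>U\<in>Btab n ?lam'. Xtab X U * ev n t T (Psi n U))"
  proof (rule Suc.hyps(1))
    show "N = nat (?lam' 1)" using Suc.hyps(2) by (simp add: strip_col_def)
  qed (rule dominant_strip_col[OF Suc.prems])
  have "1 \<in> {i \<in> {1..n}. int (Suc 0) \<le> lam i}" using Suc.hyps(2) n by simp
  then have "1 \<in> {1..?l}" by (simp only: col_len_set[OF Suc.prems])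
  then have l: "?l \<in> {1..n}" using col_len_le[of n lam 0] by simp
  have "(\<Sum>w\<in>perms n. Tw n T w) * Xpow n X lam
      = ((\<Sum>w\<in>perms n. Tw n T w) * Xpow n X ?lam') * Xcol X {1..?l}"
    by (simp only: Xpow_strip_col[OF Suc.prems] mult.assoc)
  also have "\<dots> = (\<Sum>U\<in>Btab n ?lam'. Xtab X U * (ev n t T (Psi n U) * Xcol X {1..?l}))"
    unfolding IH by (simp only: sum_distrib_right mult.assoc)
  also have "\<dots> = (\<Sum>U\<in>Btab n ?lam'. \<Sum>C\<in>cols n ?l. Xtab X (C # U) * ev n t T (Psi n (C # U)))"
    using Btab_weak_tableau l
    by (intro sum.cong refl Xtab_mult_Psi_mult_Xcol_prefix) (auto simp: weak_tableau_def)
  also have "\<dots> = (\<Sum>U\<in>Btab n lam. Xtab X U * ev n t T (Psi n U))"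
    by (rule sum_Btab_Cons[of lam N, OF Suc.hyps(2)[symmetric]])
      (simp add: Psi_not_semistandard[OF weak_tableau_Cons] ev_def)
  finally show ?case .
qed

end

theorem theorem5p2:
  fixes n :: nat and Ts :: "nat set list"
    and t tinv :: "'a::ring_1" and T X Xinv :: "nat \<Rightarrow> 'a"
  assumes "1 \<le> n"
    and "tableau n Ts"
    and "hecke_rels n t tinv T X Xinv"
  shows "(\<not> semistandard Ts \<longrightarrow> Psi n Ts = (\<lambda>_. 0))
    \<and> (\<forall>l\<in>{1..n}. card (hd Ts) \<le> l \<longrightarrow>
          ev n t T (Psi n Ts) * Xpow n X (varpi l)
            = (\<Sum>C\<in>cols n l. Xcol X C * ev n t T (Psi n (C # Ts))))
    \<and> (\<forall>lam. dominant n lam \<longrightarrow>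
          (\<Sum>w\<in>perms n. Tw n T w) * Xpow n X lam
            = (\<Sum>U\<in>Btab n lam. Xtab X U * ev n t T (Psi n U)))"
proof -
  interpret hecke_algebra n t tinv T X Xinv by (rule hecke_algebra.intro) fact
  have "weak_tableau n Ts" using assms(2) by (simp add: tableau_def weak_tableau_def)
  \<comment> \<open>(b) holds for every \<open>l\<close>.\<close>
  then show ?thesis
    using Psi_not_semistandard Psi_mult_Xpow_varpi[OF assms(2)] one0_mult_Xpow[OF assms(1)] by blast
qed

end
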